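(* Let $J\ge 2$ and, for every dimension $d$, let $F_1,\ldots,F_J$ be probability distributions on $\mathbb{R}^d$ (the $J$ competing classes) satisfying assumptions (A1)–(A3) stated in the context. For each $j$, let $\mathbf{X}_{j1},\ldots,\mathbf{X}_{jn_j}$ be a training sample from $F_j$ with $n_j\ge 2$ fixed (not depending on $d$), all training observations being mutually independent, and let the test observation $\mathbf{Z}$ be independent of the training data. Then: (a) If $\nu_{ji}^2>|\sigma_j^2-\sigma_i^2|$ for all $j\neq i$, the misclassification probability of the $k$-nearest neighbor classifier with $k<\min\{n_1,\ldots,n_J\}$ converges to $0$ as $d\to\infty$. However, if $\nu_{ji}^2<|\sigma_j^2-\sigma_i^2|$ for some $j\neq i$, then all observations from at least one class are misclassified by this classifier with probability tending to $1$ as $d\to\infty$. (b) If $\nu_{ji}^2>0$ for all $j\neq i$, the misclassification probability of the CH classifier converges to $0$ as $d\to\infty$. (c) If for all $j\neq i$ either $\nu_{ji}^2>0$ or $\sigma_j^2\neq\sigma_i^2$, the misclassification probability of the MCH classifier converges to $0$ as $d\to\infty$.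
   Context: "Measurement variables" are the coordinates of a random vector. Assumptions: (A1) In each of the $J$ classes, the coordinates have fourth moments bounded uniformly (over coordinates and over $d$). (A2) If $\mathbf{X}=(X_1,\ldots,X_d)^\top\sim F_j$ and $\mathbf{Y}=(Y_1,\ldots,Y_d)^\top\sim F_i$ ($1\le j,i\le J$) are independent and $\mathbf{U}=\mathbf{X}-\mathbf{Y}$, then $\sum_{r\neq s}|\mathrm{Corr}(U_r^2,U_s^2)|=o(d^2)$ as $d\to\infty$. (A3) Let $\boldsymbol{\mu}_j$ and $\boldsymbol{\Sigma}_j$ be the mean vector and dispersion matrix of $F_j$. For each $j$ there is a constant $\sigma_j^2$ with $\mathrm{trace}(\boldsymbol{\Sigma}_j)/d\to\sigma_j^2$, and for each $i\neq j$ there is a constant $\nu_{ji}^2$ with $\|\boldsymbol{\mu}_j-\boldsymbol{\mu}_i\|^2/d\to\nu_{ji}^2$, as $d\to\infty$. The $k$-nearest neighbor classifier assigns $\mathbf{Z}$ to the class having the most representatives among the $k$ training points closest to $\mathbf{Z}$ in Euclidean norm $\|\cdot\|$. The CH classifier computes $\rho_j(\mathbf{Z},\mathbf{X}_{ji})=\|\mathbf{Z}-\mathbf{X}_{ji}\|^2-\frac12\binom{n_j}{2}^{-1}\sum_{1\le s<t\le n_j}\|\mathbf{X}_{js}-\mathbf{X}_{jt}\|^2$ and assigns $\mathbf{Z}$ to the class $j_0$ with $\min_{i}\rho_{j_0}(\mathbf{Z},\mathbf{X}_{j_0i})<\min_i\rho_j(\mathbf{Z},\mathbf{X}_{ji})$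 for all $j\ne j_0$. The MCH classifier is the same with $\rho^*_j(\mathbf{Z},\mathbf{X}_{ji})=\|\mathbf{Z}-\mathbf{X}_{ji}\|-\frac12\binom{n_j}{2}^{-1}\sum_{1\le s<t\le n_j}\|\mathbf{X}_{js}-\mathbf{X}_{jt}\|$ in place of $\rho_j$. The misclassification probability converging to $0$ means that for each $j$, the probability that a test observation $\mathbf{Z}\sim F_j$ is not assigned to class $j$ tends to $0$. *)

theory Defs
  imports "HOL-Probability.Probability"
begin

definition vec_space :: "nat \<Rightarrow> (nat \<Rightarrow> real) measure" where
  "vec_space d = PiM {..<d} (\<lambda>_. borel)"

definition eucl_norm :: "nat \<Rightarrow> (nat \<Rightarrow> real) \<Rightarrow> real" where
  "eucl_norm d u = sqrt (\<Sum>r<d. (u r)^2)"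

definition eucl_dist :: "nat \<Rightarrow> (nat \<Rightarrow> real) \<Rightarrow> (nat \<Rightarrow> real) \<Rightarrow> real" where
  "eucl_dist d u v = eucl_norm d (\<lambda>r. u r - v r)"

definition mean_vec :: "(nat \<Rightarrow> real) measure \<Rightarrow> nat \<Rightarrow> real" where
  "mean_vec M r = (\<integral>x. x r \<partial>M)"

definition var_of :: "'a measure \<Rightarrow> ('a \<Rightarrow> real) \<Rightarrow> real" where
  "var_of M f = (\<integral>x. (f x - (\<integral>y. f y \<partial>M))^2 \<partial>M)"

definition cov_of :: "'a measure \<Rightarrow> ('a \<Rightarrow> real) \<Rightarrow> ('a \<Rightarrow> real) \<Rightarrow> real" where
  "cov_of M f g = (\<integral>x. (f x - (\<integral>y. f y \<partial>M)) * (g x - (\<integral>y. g y \<partial>M)) \<partial>M)"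

text \<open>Correlation; by the HOL convention x/0 = 0 it is 0 if a variance vanishes.\<close>
definition corr_of :: "'a measure \<Rightarrow> ('a \<Rightarrow> real) \<Rightarrow> ('a \<Rightarrow> real) \<Rightarrow> real" where
  "corr_of M f g = cov_of M f g / sqrt (var_of M f * var_of M g)"

definition trace_disp :: "nat \<Rightarrow> (nat \<Rightarrow> real) measure \<Rightarrow> real" where
  "trace_disp d M = (\<Sum>r<d. var_of M (\<lambda>x. x r))"

definition train_idx :: "nat \<Rightarrow> (nat \<Rightarrow> nat) \<Rightarrow> (nat \<times> nat) set" where
  "train_idx J n = {(c, i). c < J \<and> i < n c}"

definition train_test ::
  "nat \<Rightarrow> (nat \<Rightarrow> nat) \<Rightarrow> (nat \<Rightarrow> (nat \<Rightarrow> real) measure) \<Rightarrow> nat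
    \<Rightarrow> ((nat \<times> nat \<Rightarrow> nat \<Rightarrow> real) \<times> (nat \<Rightarrow> real)) measure" where
  "train_test J n F j = (PiM (train_idx J n) (\<lambda>p. F (fst p))) \<Otimes>\<^sub>M F j"

definition knn_set :: "nat \<Rightarrow> nat \<Rightarrow> (nat \<Rightarrow> nat) \<Rightarrow> nat \<Rightarrow> (nat \<times> nat \<Rightarrow> nat \<Rightarrow> real)
    \<Rightarrow> (nat \<Rightarrow> real) \<Rightarrow> (nat \<times> nat) set \<Rightarrow> bool" where
  "knn_set d J n k x z S \<longleftrightarrow> S \<subseteq> train_idx J n \<and> card S = k \<and>
     (\<forall>p\<in>S. \<forall>q\<in>train_idx J n - S. eucl_dist d z (x p) \<le> eucl_dist d z (x q))"

definition votes :: "(nat \<times> nat) set \<Rightarrow> nat \<Rightarrow> nat" where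
  "votes S c = card {p\<in>S. fst p = c}"

text \<open>z is assigned to class j irrespective of how ties (in distances or votes) are broken.\<close>
definition knn_assigns :: "nat \<Rightarrow> nat \<Rightarrow> (nat \<Rightarrow> nat) \<Rightarrow> nat \<Rightarrow> (nat \<times> nat \<Rightarrow> nat \<Rightarrow> real)
    \<Rightarrow> (nat \<Rightarrow> real) \<Rightarrow> nat \<Rightarrow> bool" where
  "knn_assigns d J n k x z j \<longleftrightarrow> j < J \<and>
     (\<forall>S. knn_set d J n k x z S \<longrightarrow> (\<forall>c<J. c \<noteq> j \<longrightarrow> votes S c < votes S j))"

text \<open>z can be assigned to class j under some way of breaking ties.\<close>
definition knn_may_assign :: "nat \<Rightarrow> nat \<Rightarrow> (nat \<Rightarrow> nat) \<Rightarrow> nat \<Rightarrow> (nat \<times> nat \<Rightarrow> nat \<Rightarrow> real)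
    \<Rightarrow> (nat \<Rightarrow> real) \<Rightarrow> nat \<Rightarrow> bool" where
  "knn_may_assign d J n k x z j \<longleftrightarrow> j < J \<and>
     (\<exists>S. knn_set d J n k x z S \<and> (\<forall>c<J. votes S c \<le> votes S j))"

definition rho_gen :: "((nat \<Rightarrow> real) \<Rightarrow> (nat \<Rightarrow> real) \<Rightarrow> real) \<Rightarrow> (nat \<Rightarrow> nat)
    \<Rightarrow> (nat \<times> nat \<Rightarrow> nat \<Rightarrow> real) \<Rightarrow> (nat \<Rightarrow> real) \<Rightarrow> nat \<Rightarrow> nat \<Rightarrow> real" where
  "rho_gen \<delta> n x z c i = \<delta> z (x (c, i)) -
     (1/2) * ((\<Sum>t<n c. \<Sum>s<t. \<delta> (x (c, s)) (x (c, t))) / real (n c choose 2))"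

definition min_rho :: "((nat \<Rightarrow> real) \<Rightarrow> (nat \<Rightarrow> real) \<Rightarrow> real) \<Rightarrow> (nat \<Rightarrow> nat)
    \<Rightarrow> (nat \<times> nat \<Rightarrow> nat \<Rightarrow> real) \<Rightarrow> (nat \<Rightarrow> real) \<Rightarrow> nat \<Rightarrow> real" where
  "min_rho \<delta> n x z c = Min ((\<lambda>i. rho_gen \<delta> n x z c i) ` {..<n c})"

definition gen_assigns :: "((nat \<Rightarrow> real) \<Rightarrow> (nat \<Rightarrow> real) \<Rightarrow> real) \<Rightarrow> nat \<Rightarrow> (nat \<Rightarrow> nat)
    \<Rightarrow> (nat \<times> nat \<Rightarrow> nat \<Rightarrow> real) \<Rightarrow> (nat \<Rightarrow> real) \<Rightarrow> nat \<Rightarrow> bool" where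
  "gen_assigns \<delta> J n x z j0 \<longleftrightarrow> j0 < J \<and>
     (\<forall>c<J. c \<noteq> j0 \<longrightarrow> min_rho \<delta> n x z j0 < min_rho \<delta> n x z c)"

definition ch_assigns :: "nat \<Rightarrow> nat \<Rightarrow> (nat \<Rightarrow> nat)
    \<Rightarrow> (nat \<times> nat \<Rightarrow> nat \<Rightarrow> real) \<Rightarrow> (nat \<Rightarrow> real) \<Rightarrow> nat \<Rightarrow> bool" where
  "ch_assigns d = gen_assigns (\<lambda>u v. (eucl_dist d u v)^2)"

definition mch_assigns :: "nat \<Rightarrow> nat \<Rightarrow> (nat \<Rightarrow> nat)
    \<Rightarrow> (nat \<times> nat \<Rightarrow> nat \<Rightarrow> real) \<Rightarrow> (nat \<Rightarrow> real) \<Rightarrow> nat \<Rightarrow> bool" where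
  "mch_assigns d = gen_assigns (eucl_dist d)"

end

theory Submission
  imports Defs
begin

(* For independent X ~ F_a and Y ~ F_b, E |X - Y|^2 = tr Sigma_a + tr Sigma_b + |mu_a - mu_b|^2,
   and (A1) together with (A2) make Var |X - Y|^2 = o(d^2).  By Chebyshev's inequality
   |X - Y|^2 / d therefore tends in probability to m_ab = sigma_a^2 + sigma_b^2 + nu_ab^2
   (with nu_aa = 0).  The sample sizes do not grow with d, so with probability tending to one
   all normalised squared distances from Z ~ F_j to the training points, and between training
   points of the same class, are simultaneously close to their limits.  On this event every
   classifier decides deterministically: the k nearest neighbours all come from class j if
   m_jj < m_jc for all c <> j, and none of them does if m_ji < m_jj for some i; the CH statistic
   of class c is about d (m_jc - m_cc / 2) = d (sigma_j^2 + nu_jc^2), smallest exactly at c = j when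
   all nu_jc^2 > 0; the MCH statistic is about sqrt d (sqrt m_jc - sqrt m_cc / 2), and strict
   concavity of the square root gives sqrt m_jc > (sqrt m_jj + sqrt m_cc) / 2 unless
   nu_jc^2 = 0 and sigma_j^2 = sigma_c^2. *)

lemma power4_diff_le:
  fixes a b :: real
  shows "(a - b)^4 \<le> 8 * (a^4 + b^4)"
proof -
  have "(a - b)^2 \<le> 2 * (a^2 + b^2)"
    using sum_squares_ge_zero[of "a + b" 0] by (simp add: power2_eq_square algebra_simps)
  then have "(a - b)^4 \<le> (2 * (a^2 + b^2))^2"
    using power_mono[of "(a - b)^2" _ 2] by (simp add: power_mult[symmetric])
  also have "\<dots> \<le> 8 * (a^4 + b^4)"
    using sum_squares_ge_zero[of "a^2 - b^2" 0] by (simp add: power2_eq_square power4_eq_xxxx algebra_simps)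
  finally show ?thesis .
qed

lemma abs_mult_le_sum_squares:
  fixes a b :: real
  shows "\<bar>a * b\<bar> \<le> a^2 + b^2"
proof -
  have "2 * \<bar>a * b\<bar> \<le> a^2 + b^2"
    using sum_squares_ge_zero[of "\<bar>a\<bar> - \<bar>b\<bar>" 0] by (simp add: abs_mult power2_eq_square algebra_simps)
  then show ?thesis by simp
qed

lemma sqrt_bounds_of_deviation:
  fixes D d \<mu> e :: real
  assumes "0 \<le> D" "0 < d" "0 \<le> \<mu>" "0 \<le> e" and dev: "\<bar>D / d - \<mu>\<bar> \<le> e"
  shows "sqrt d * (sqrt \<mu> - sqrt e) \<le> sqrt D" "sqrt D \<le> sqrt d * (sqrt \<mu> + sqrt e)"
proof -
  have D: "sqrt D = sqrt d * sqrt (D / d)"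
    using assms by (simp add: real_sqrt_mult[symmetric])
  have "sqrt \<mu> \<le> sqrt (D / d + e)" "sqrt (D / d) \<le> sqrt (\<mu> + e)"
    using dev by (auto intro!: real_sqrt_le_mono)
  moreover have "sqrt (D / d + e) \<le> sqrt (D / d) + sqrt e" "sqrt (\<mu> + e) \<le> sqrt \<mu> + sqrt e"
    using assms by (simp_all add: sqrt_add_le_add_sqrt)
  ultimately have "sqrt \<mu> - sqrt e \<le> sqrt (D / d)" "sqrt (D / d) \<le> sqrt \<mu> + sqrt e"
    by linarith+
  then show "sqrt d * (sqrt \<mu> - sqrt e) \<le> sqrt D" "sqrt D \<le> sqrt d * (sqrt \<mu> + sqrt e)"
    unfolding D using assms by (auto intro: mult_left_mono)
qed

lemma mult_bounds_of_deviation: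
  fixes D d \<mu> e :: real
  assumes "0 < d" and "\<bar>D / d - \<mu>\<bar> \<le> e"
  shows "d * (\<mu> - e) \<le> D" "D \<le> d * (\<mu> + e)"
proof -
  have "\<mu> - e \<le> D / d" "D / d \<le> \<mu> + e" using assms(2) by auto
  then show "d * (\<mu> - e) \<le> D" "D \<le> d * (\<mu> + e)"
    using assms(1) by (simp_all add: pos_le_divide_eq pos_divide_le_eq mult.commute)
qed

lemma sqrt_midpoint_less:
  fixes a b \<nu> :: real
  assumes "0 \<le> a" "0 \<le> b" "0 \<le> \<nu>" and "0 < \<nu> \<or> a \<noteq> b"
  shows "sqrt (a + a) / 2 + sqrt (b + b) / 2 < sqrt (a + b + \<nu>)"
proof -
  define x y where "x = sqrt (a + a)" and "y = sqrt (b + b)"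
  have "((x + y) / 2)^2 = a + b - (x - y)^2 / 4"
    using assms unfolding x_def y_def by (simp add: power2_eq_square field_simps)
  moreover have "0 < (x - y)^2 / 4 + \<nu>"
  proof (cases "a = b")
    case False
    then have "x \<noteq> y" using assms unfolding x_def y_def by simp
    then show ?thesis using assms by (simp add: add_pos_nonneg)
  qed (use assms in \<open>simp add: add_nonneg_pos\<close>)
  ultimately have "((x + y) / 2)^2 < a + b + \<nu>"
    by linarith
  then show ?thesis
    unfolding x_def y_def by (auto dest: real_less_rsqrt)
qed

lemma finite_positive_lower_bound:
  fixes g :: "'a \<Rightarrow> real"
  assumes "finite A" "\<And>c. c \<in> A \<Longrightarrow> 0 < g c"
  obtains e where "0 < e" "\<And>c. c \<in> A \<Longrightarrow> e \<le> g c"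
proof (cases "A = {}")
  case True
  then show ?thesis by (intro that[of 1]) auto
next
  case False
  then show ?thesis by (intro that[of "Min (g ` A)"]) (use assms in auto)
qed

lemma average_of_pairs_bounds:
  fixes f :: "nat \<Rightarrow> nat \<Rightarrow> real"
  assumes "2 \<le> N" and bounds: "\<And>s t. s < t \<Longrightarrow> t < N \<Longrightarrow> lo \<le> f s t \<and> f s t \<le> hi"
  shows "lo \<le> (\<Sum>t<N. \<Sum>s<t. f s t) / real (N choose 2)"
    and "(\<Sum>t<N. \<Sum>s<t. f s t) / real (N choose 2) \<le> hi"
proof -
  have pairs: "(\<Sum>t<N. \<Sum>s<t. c) = c * real (N choose 2)" for c :: real
  proof (induction N)
    case (Suc N)
    have "Suc N choose 2 = N + (N choose 2)"
      using binomial_Suc_Suc[of N 1] by (simp add: numeral_2_eq_2)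
    then show ?case using Suc by (simp add: algebra_simps)
  qed simp
  have pos: "0 < real (N choose 2)" using assms(1) by simp
  have "(\<Sum>t<N. \<Sum>s<t. lo) \<le> (\<Sum>t<N. \<Sum>s<t. f s t)" "(\<Sum>t<N. \<Sum>s<t. f s t) \<le> (\<Sum>t<N. \<Sum>s<t. hi)"
    by (intro sum_mono; use bounds in simp)+
  then show "lo \<le> (\<Sum>t<N. \<Sum>s<t. f s t) / real (N choose 2)"
    and "(\<Sum>t<N. \<Sum>s<t. f s t) / real (N choose 2) \<le> hi"
    using pos unfolding pairs by (simp_all add: pos_le_divide_eq pos_divide_le_eq)
qed

lemma (in prob_space) integrable_of_integrable_power4:
  fixes f :: "'a \<Rightarrow> real"
  assumes "f \<in> borel_measurable M" "integrable M (\<lambda>x. f x ^ 4)"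
  shows "integrable M (\<lambda>x. f x ^ 2)" "integrable M f"
proof -
  have power4: "(f x ^ 2)^2 = f x ^ 4" for x
    by (simp add: power4_eq_xxxx power2_eq_square)
  show sq: "integrable M (\<lambda>x. f x ^ 2)"
    by (rule square_integrable_imp_integrable) (use assms power4 in simp_all)
  show "integrable M f"
    by (rule square_integrable_imp_integrable) (use assms sq in simp_all)
qed

lemma integrable_mult_of_square_integrable:
  fixes f g :: "'a \<Rightarrow> real"
  assumes "f \<in> borel_measurable M" "g \<in> borel_measurable M"
    and "integrable M (\<lambda>x. f x ^ 2)" "integrable M (\<lambda>x. g x ^ 2)"
  shows "integrable M (\<lambda>x. f x * g x)"
proof (rule Bochner_Integration.integrable_bound)
  show "integrable M (\<lambda>x. f x ^ 2 + g x ^ 2)" using assms by simp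
  show "AE x in M. norm (f x * g x) \<le> norm (f x ^ 2 + g x ^ 2)"
    using abs_mult_le_sum_squares by auto
qed (use assms in simp)

lemma var_of_nonneg: "0 \<le> var_of M f"
  unfolding var_of_def by simp

lemma cov_of_self: "cov_of M f f = var_of M f"
  unfolding cov_of_def var_of_def by (simp add: power2_eq_square)

lemma cov_of_commute: "cov_of M f g = cov_of M g f"
  unfolding cov_of_def by (simp add: mult.commute)

lemma (in prob_space) var_of_eq:
  fixes f :: "'a \<Rightarrow> real"
  assumes "integrable M f" "integrable M (\<lambda>x. f x ^ 2)"
  shows "var_of M f = expectation (\<lambda>x. f x ^ 2) - (expectation f)^2"
  unfolding var_of_def using variance_eq[OF assms] by simp

lemma (in prob_space) cov_of_eq_0_if_var_of_eq_0:
  fixes f g :: "'a \<Rightarrow> real"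
  assumes "f \<in> borel_measurable M" "g \<in> borel_measurable M"
    and "integrable M (\<lambda>x. f x ^ 2)" and "var_of M f = 0"
  shows "cov_of M f g = 0"
proof -
  have "integrable M f" by (rule square_integrable_imp_integrable) (use assms in simp_all)
  then have "integrable M (\<lambda>x. (f x - expectation f)^2)"
    unfolding power2_diff using assms(3)
    by (intro Bochner_Integration.integrable_add Bochner_Integration.integrable_diff
        integrable_mult_left integrable_mult_right integrable_const)
  then have "AE x in M. (f x - expectation f)^2 = 0"
    using assms(4) integral_nonneg_eq_0_iff_AE[of M "\<lambda>x. (f x - expectation f)^2"]
    unfolding var_of_def by simp
  then have "AE x in M. (f x - expectation f) * (g x - expectation g) = 0"
    by eventually_elim simp
  then show ?thesis
    unfolding cov_of_def using assms by (simp add: integral_cong_AE[where g="\<lambda>_. 0"])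
qed

lemma (in prob_space) cov_le_abs_corr_mult:
  fixes f g :: "'a \<Rightarrow> real"
  assumes "f \<in> borel_measurable M" "g \<in> borel_measurable M"
    and "integrable M (\<lambda>x. f x ^ 2)" "integrable M (\<lambda>x. g x ^ 2)"
    and "var_of M f \<le> K" "var_of M g \<le> K"
  shows "cov_of M f g \<le> \<bar>corr_of M f g\<bar> * K"
proof -
  have K: "0 \<le> K" using assms(5) var_of_nonneg order_trans by blast
  show ?thesis
  proof (cases "var_of M f = 0 \<or> var_of M g = 0")
    case True
    then have "cov_of M f g = 0"
      using cov_of_eq_0_if_var_of_eq_0[OF assms(1,2,3)] cov_of_eq_0_if_var_of_eq_0[OF assms(2,1,4)]
      by (auto simp: cov_of_commute[of M f g])
    with K show ?thesis by simp
  next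
    case False
    then have pos: "sqrt (var_of M f * var_of M g) \<noteq> 0"
      by simp
    have "var_of M f * var_of M g \<le> K * K"
      using assms(5,6) K var_of_nonneg[of M g] by (intro mult_mono)
    then have "sqrt (var_of M f * var_of M g) \<le> sqrt (K * K)"
      by (rule real_sqrt_le_mono)
    then have sqrt_le: "sqrt (var_of M f * var_of M g) \<le> K"
      using K by simp
    have "cov_of M f g = corr_of M f g * sqrt (var_of M f * var_of M g)"
      using pos unfolding corr_of_def by simp
    also have "\<dots> \<le> \<bar>corr_of M f g\<bar> * sqrt (var_of M f * var_of M g)"
      using var_of_nonneg[of M f] var_of_nonneg[of M g] by (intro mult_right_mono) simp_all
    also have "\<dots> \<le> \<bar>corr_of M f g\<bar> * K"
      using sqrt_le by (intro mult_left_mono) auto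
    finally show ?thesis .
  qed
qed

context pair_prob_space
begin

lemma distr_snd: "distr (M1 \<Otimes>\<^sub>M M2) M2 snd = M2"
proof (intro measure_eqI)
  fix A assume A: "A \<in> sets (distr (M1 \<Otimes>\<^sub>M M2) M2 snd)"
  then have "emeasure (distr (M1 \<Otimes>\<^sub>M M2) M2 snd) A = emeasure (M1 \<Otimes>\<^sub>M M2) (space M1 \<times> A)"
    by (auto simp: emeasure_distr space_pair_measure dest: sets.sets_into_space
        intro!: arg_cong2[where f=emeasure])
  with A show "emeasure (distr (M1 \<Otimes>\<^sub>M M2) M2 snd) A = emeasure M2 A"
    by (simp add: M2.emeasure_pair_measure_Times M1.emeasure_space_1)
qed simp

lemma
  fixes f :: "'a \<Rightarrow> real"
  assumes "integrable M1 f"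
  shows integrable_comp_fst: "integrable (M1 \<Otimes>\<^sub>M M2) (\<lambda>\<omega>. f (fst \<omega>))"
    and integral_comp_fst: "(\<integral>\<omega>. f (fst \<omega>) \<partial>(M1 \<Otimes>\<^sub>M M2)) = integral\<^sup>L M1 f"
proof -
  have f: "f \<in> borel_measurable M1" using assms by simp
  show "integrable (M1 \<Otimes>\<^sub>M M2) (\<lambda>\<omega>. f (fst \<omega>))"
    using integrable_distr_eq[OF measurable_fst f, of M2] M2.distr_pair_fst[of M1] assms by simp
  show "(\<integral>\<omega>. f (fst \<omega>) \<partial>(M1 \<Otimes>\<^sub>M M2)) = integral\<^sup>L M1 f"
    using integral_distr[OF measurable_fst f, of M2] M2.distr_pair_fst[of M1] by simp
qed

lemma
  fixes f :: "'b \<Rightarrow> real"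
  assumes "integrable M2 f"
  shows integrable_comp_snd: "integrable (M1 \<Otimes>\<^sub>M M2) (\<lambda>\<omega>. f (snd \<omega>))"
    and integral_comp_snd: "(\<integral>\<omega>. f (snd \<omega>) \<partial>(M1 \<Otimes>\<^sub>M M2)) = integral\<^sup>L M2 f"
proof -
  have f: "f \<in> borel_measurable M2" using assms by simp
  show "integrable (M1 \<Otimes>\<^sub>M M2) (\<lambda>\<omega>. f (snd \<omega>))"
    using integrable_distr_eq[OF measurable_snd f, of M1] distr_snd assms by simp
  show "(\<integral>\<omega>. f (snd \<omega>) \<partial>(M1 \<Otimes>\<^sub>M M2)) = integral\<^sup>L M2 f"
    using integral_distr[OF measurable_snd f, of M1] distr_snd by simp
qed

lemma
  fixes f :: "'a \<Rightarrow> real" and g :: "'b \<Rightarrow> real"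
  assumes "f \<in> borel_measurable M1" "g \<in> borel_measurable M2"
    and "integrable M1 (\<lambda>x. f x ^ 2)" "integrable M2 (\<lambda>y. g y ^ 2)"
  shows integrable_fst_mult_snd: "integrable (M1 \<Otimes>\<^sub>M M2) (\<lambda>\<omega>. f (fst \<omega>) * g (snd \<omega>))"
    and integral_fst_mult_snd:
      "(\<integral>\<omega>. f (fst \<omega>) * g (snd \<omega>) \<partial>(M1 \<Otimes>\<^sub>M M2)) = integral\<^sup>L M1 f * integral\<^sup>L M2 g"
proof -
  show int: "integrable (M1 \<Otimes>\<^sub>M M2) (\<lambda>\<omega>. f (fst \<omega>) * g (snd \<omega>))"
    using assms integrable_comp_fst integrable_comp_snd
    by (intro integrable_mult_of_square_integrable) auto
  have "(\<integral>\<omega>. f (fst \<omega>) * g (snd \<omega>) \<partial>(M1 \<Otimes>\<^sub>M M2)) = (\<integral>x. (\<integral>y. f x * g y \<partial>M2) \<partial>M1)"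
    using integral_fst'[OF int] by simp
  then show "(\<integral>\<omega>. f (fst \<omega>) * g (snd \<omega>) \<partial>(M1 \<Otimes>\<^sub>M M2)) = integral\<^sup>L M1 f * integral\<^sup>L M2 g"
    by simp
qed

end

lemma (in prob_space) square_integrable_sum:
  fixes X :: "'i \<Rightarrow> 'a \<Rightarrow> real"
  assumes "finite I" "\<And>i. i \<in> I \<Longrightarrow> X i \<in> borel_measurable M"
    and "\<And>i. i \<in> I \<Longrightarrow> integrable M (\<lambda>x. X i x ^ 2)"
  shows "integrable M (\<lambda>x. (\<Sum>i\<in>I. X i x)^2)"
  unfolding power2_eq_square sum_product
  using assms by (intro Bochner_Integration.integrable_sum integrable_mult_of_square_integrable) auto

lemma (in prob_space) var_of_sum:
  fixes X :: "'i \<Rightarrow> 'a \<Rightarrow> real"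
  assumes "finite I" and meas: "\<And>i. i \<in> I \<Longrightarrow> X i \<in> borel_measurable M"
    and sq: "\<And>i. i \<in> I \<Longrightarrow> integrable M (\<lambda>x. X i x ^ 2)"
  shows "var_of M (\<lambda>x. \<Sum>i\<in>I. X i x) = (\<Sum>i\<in>I. \<Sum>j\<in>I. cov_of M (X i) (X j))"
proof -
  define Y where "Y i x = X i x - expectation (X i)" for i x
  have int: "integrable M (X i)" if "i \<in> I" for i
    by (rule square_integrable_imp_integrable) (use that meas sq in simp_all)
  have Y_sq: "integrable M (\<lambda>x. Y i x ^ 2)" if "i \<in> I" for i
    using int[OF that] sq[OF that] unfolding Y_def power2_diff by simp
  have Y_prod: "integrable M (\<lambda>x. Y i x * Y j x)" if "i \<in> I" "j \<in> I" for i j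
    using that meas Y_sq unfolding Y_def[abs_def] by (intro integrable_mult_of_square_integrable) auto
  have centered: "(\<Sum>i\<in>I. X i x) - expectation (\<lambda>x. \<Sum>i\<in>I. X i x) = (\<Sum>i\<in>I. Y i x)" for x
    unfolding Y_def using int by (simp add: sum_subtractf)
  have "var_of M (\<lambda>x. \<Sum>i\<in>I. X i x) = expectation (\<lambda>x. \<Sum>i\<in>I. \<Sum>j\<in>I. Y i x * Y j x)"
    unfolding var_of_def centered power2_eq_square sum_product ..
  also have "\<dots> = (\<Sum>i\<in>I. \<Sum>j\<in>I. expectation (\<lambda>x. Y i x * Y j x))"
    using Y_prod by (simp add: Bochner_Integration.integral_sum integrable_sum)
  also have "\<dots> = (\<Sum>i\<in>I. \<Sum>j\<in>I. cov_of M (X i) (X j))"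
    unfolding cov_of_def Y_def ..
  finally show ?thesis .
qed

lemma (in prob_space) var_of_sum_le:
  fixes X :: "'i \<Rightarrow> 'a \<Rightarrow> real"
  assumes "finite I" and meas: "\<And>i. i \<in> I \<Longrightarrow> X i \<in> borel_measurable M"
    and sq: "\<And>i. i \<in> I \<Longrightarrow> integrable M (\<lambda>x. X i x ^ 2)"
    and var: "\<And>i. i \<in> I \<Longrightarrow> var_of M (X i) \<le> K"
  shows "var_of M (\<lambda>x. \<Sum>i\<in>I. X i x)
    \<le> K * card I + K * (\<Sum>i\<in>I. \<Sum>j\<in>I - {i}. \<bar>corr_of M (X i) (X j)\<bar>)"
proof -
  have row: "(\<Sum>j\<in>I. cov_of M (X i) (X j)) \<le> K + K * (\<Sum>j\<in>I - {i}. \<bar>corr_of M (X i) (X j)\<bar>)"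
    if i: "i \<in> I" for i
  proof -
    have "(\<Sum>j\<in>I. cov_of M (X i) (X j)) = var_of M (X i) + (\<Sum>j\<in>I - {i}. cov_of M (X i) (X j))"
      using i \<open>finite I\<close> by (simp add: sum.remove cov_of_self)
    also have "\<dots> \<le> K + (\<Sum>j\<in>I - {i}. \<bar>corr_of M (X i) (X j)\<bar> * K)"
      using i meas sq var by (intro add_mono sum_mono cov_le_abs_corr_mult) auto
    finally show ?thesis by (simp add: sum_distrib_left mult.commute)
  qed
  have "(\<Sum>i\<in>I. \<Sum>j\<in>I. cov_of M (X i) (X j))
      \<le> (\<Sum>i\<in>I. K + K * (\<Sum>j\<in>I - {i}. \<bar>corr_of M (X i) (X j)\<bar>))"
    by (rule sum_mono) (rule row)
  then show ?thesis
    using var_of_sum[OF assms(1-3)] by (simp add: sum.distrib sum_distrib_left mult.commute)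
qed

definition sq_dist :: "nat \<Rightarrow> (nat \<Rightarrow> real) \<Rightarrow> (nat \<Rightarrow> real) \<Rightarrow> real" where
  "sq_dist d u v = (\<Sum>r<d. (u r - v r)^2)"

definition coord_sq_diff :: "nat \<Rightarrow> (nat \<Rightarrow> real) \<times> (nat \<Rightarrow> real) \<Rightarrow> real" where
  "coord_sq_diff r = (\<lambda>(x, y). (x r - y r)^2)"

lemma sq_dist_nonneg: "0 \<le> sq_dist d u v"
  unfolding sq_dist_def by (intro sum_nonneg) simp

lemma eucl_dist_eq_sqrt_sq_dist: "eucl_dist d u v = sqrt (sq_dist d u v)"
  unfolding eucl_dist_def eucl_norm_def sq_dist_def ..

lemma eucl_dist_power2: "(eucl_dist d u v)^2 = sq_dist d u v"
  by (simp add: eucl_dist_eq_sqrt_sq_dist sq_dist_nonneg)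

lemma sq_dist_eq_sum_coord_sq_diff: "sq_dist d (fst \<omega>) (snd \<omega>) = (\<Sum>r<d. coord_sq_diff r \<omega>)"
  unfolding sq_dist_def coord_sq_diff_def by (simp add: case_prod_beta)

lemma measurable_coordinate:
  assumes "sets M = sets (vec_space d)" "r < d"
  shows "(\<lambda>x. x r) \<in> borel_measurable M"
  unfolding measurable_cong_sets[OF assms(1) refl] vec_space_def
  using assms(2) by (intro measurable_component_singleton) auto

lemma measurable_sq_dist:
  assumes "f \<in> measurable N M1" "g \<in> measurable N M2"
    and "sets M1 = sets (vec_space d)" "sets M2 = sets (vec_space d)"
  shows "(\<lambda>\<omega>. sq_dist d (f \<omega>) (g \<omega>)) \<in> borel_measurable N"
proof -
  have "(\<lambda>\<omega>. f \<omega> r) \<in> borel_measurable N" "(\<lambda>\<omega>. g \<omega> r) \<in> borel_measurable N" if "r < d" for r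
    using measurable_compose[OF assms(1) measurable_coordinate[OF assms(3) that]]
      measurable_compose[OF assms(2) measurable_coordinate[OF assms(4) that]] by auto
  then show ?thesis
    unfolding sq_dist_def by (intro borel_measurable_sum borel_measurable_power borel_measurable_diff) auto
qed

section \<open>Concentration of the squared distance of an independent pair\<close>

(* Assumption (A2) says that sq_corr_sum d (F_j \<Otimes> F_i) = o(d^2). *)
definition sq_corr_sum :: "nat \<Rightarrow> ((nat \<Rightarrow> real) \<times> (nat \<Rightarrow> real)) measure \<Rightarrow> real" where
  "sq_corr_sum d P = (\<Sum>r<d. \<Sum>s\<in>{..<d} - {r}. \<bar>corr_of P (coord_sq_diff r) (coord_sq_diff s)\<bar>)"

lemma coord_sq_diff_apply: "coord_sq_diff r \<omega> = (fst \<omega> r - snd \<omega> r)^2"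
  unfolding coord_sq_diff_def by (simp add: case_prod_beta)

locale fourth_moment_pair = pair_prob_space M1 M2
  for M1 M2 :: "(nat \<Rightarrow> real) measure" +
  fixes d :: nat and C :: real
  assumes sets_M1: "sets M1 = sets (vec_space d)"
    and sets_M2: "sets M2 = sets (vec_space d)"
    and integrable_power4_M1: "\<And>r. r < d \<Longrightarrow> integrable M1 (\<lambda>x. (x r)^4)"
    and integrable_power4_M2: "\<And>r. r < d \<Longrightarrow> integrable M2 (\<lambda>x. (x r)^4)"
    and moment4_M1: "\<And>r. r < d \<Longrightarrow> (\<integral>x. (x r)^4 \<partial>M1) \<le> C"
    and moment4_M2: "\<And>r. r < d \<Longrightarrow> (\<integral>x. (x r)^4 \<partial>M2) \<le> C"
begin

abbreviation pair_sq_dist :: "(nat \<Rightarrow> real) \<times> (nat \<Rightarrow> real) \<Rightarrow> real" where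
  "pair_sq_dist \<omega> \<equiv> sq_dist d (fst \<omega>) (snd \<omega>)"

context
  fixes r assumes r: "r < d"
begin

lemma measurable_coord1: "(\<lambda>x. x r) \<in> borel_measurable M1"
  and measurable_coord2: "(\<lambda>x. x r) \<in> borel_measurable M2"
  using measurable_coordinate[OF sets_M1 r] measurable_coordinate[OF sets_M2 r] .

lemma integrable_coord1: "integrable M1 (\<lambda>x. x r)" "integrable M1 (\<lambda>x. (x r)^2)"
  and integrable_coord2: "integrable M2 (\<lambda>x. x r)" "integrable M2 (\<lambda>x. (x r)^2)"
  using M1.integrable_of_integrable_power4[OF measurable_coord1 integrable_power4_M1[OF r]]
    M2.integrable_of_integrable_power4[OF measurable_coord2 integrable_power4_M2[OF r]]
  by auto

lemma measurable_coord_sq_diff: "coord_sq_diff r \<in> borel_measurable (M1 \<Otimes>\<^sub>M M2)"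
proof -
  have "(\<lambda>\<omega>. fst \<omega> r) \<in> borel_measurable (M1 \<Otimes>\<^sub>M M2)"
    "(\<lambda>\<omega>. snd \<omega> r) \<in> borel_measurable (M1 \<Otimes>\<^sub>M M2)"
    using measurable_compose[OF measurable_fst measurable_coord1]
      measurable_compose[OF measurable_snd measurable_coord2] .
  then show ?thesis
    unfolding coord_sq_diff_apply[abs_def] by simp
qed

lemma coord_sq_diff_expand:
  "coord_sq_diff r \<omega> = (fst \<omega> r)^2 - 2 * (fst \<omega> r * snd \<omega> r) + (snd \<omega> r)^2"
  unfolding coord_sq_diff_apply by (simp add: power2_diff)

lemma integrable_coord_sq_diff: "integrable (M1 \<Otimes>\<^sub>M M2) (coord_sq_diff r)"
  unfolding coord_sq_diff_expand[abs_def]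
  using integrable_comp_fst[OF integrable_coord1(2)] integrable_comp_snd[OF integrable_coord2(2)]
    integrable_fst_mult_snd[OF measurable_coord1 measurable_coord2 integrable_coord1(2) integrable_coord2(2)]
  by simp

lemma expectation_coord_sq_diff:
  "expectation (coord_sq_diff r)
    = var_of M1 (\<lambda>x. x r) + var_of M2 (\<lambda>x. x r) + (mean_vec M1 r - mean_vec M2 r)^2"
  unfolding coord_sq_diff_expand[abs_def]
    M1.var_of_eq[OF integrable_coord1] M2.var_of_eq[OF integrable_coord2] mean_vec_def
  using integrable_comp_fst[OF integrable_coord1(2)] integrable_comp_snd[OF integrable_coord2(2)]
    integrable_fst_mult_snd[OF measurable_coord1 measurable_coord2 integrable_coord1(2) integrable_coord2(2)]
    integral_comp_fst[OF integrable_coord1(2)] integral_comp_snd[OF integrable_coord2(2)]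
    integral_fst_mult_snd[OF measurable_coord1 measurable_coord2 integrable_coord1(2) integrable_coord2(2)]
  by (simp add: power2_diff)

lemma
  shows integrable_coord_sq_diff_sq: "integrable (M1 \<Otimes>\<^sub>M M2) (\<lambda>\<omega>. coord_sq_diff r \<omega> ^ 2)"
    and expectation_coord_sq_diff_sq_le: "expectation (\<lambda>\<omega>. coord_sq_diff r \<omega> ^ 2) \<le> 16 * C"
proof -
  have sq: "coord_sq_diff r \<omega> ^ 2 = (fst \<omega> r - snd \<omega> r)^4" for \<omega>
    unfolding coord_sq_diff_apply by simp
  have bound: "integrable (M1 \<Otimes>\<^sub>M M2) (\<lambda>\<omega>. 8 * ((fst \<omega> r)^4 + (snd \<omega> r)^4))"
    using integrable_comp_fst[OF integrable_power4_M1[OF r]]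
      integrable_comp_snd[OF integrable_power4_M2[OF r]] by simp
  show int: "integrable (M1 \<Otimes>\<^sub>M M2) (\<lambda>\<omega>. coord_sq_diff r \<omega> ^ 2)"
  proof (rule Bochner_Integration.integrable_bound[OF bound])
    show "(\<lambda>\<omega>. coord_sq_diff r \<omega> ^ 2) \<in> borel_measurable (M1 \<Otimes>\<^sub>M M2)"
      using measurable_coord_sq_diff by simp
    show "AE \<omega> in M1 \<Otimes>\<^sub>M M2. norm (coord_sq_diff r \<omega> ^ 2) \<le> norm (8 * ((fst \<omega> r)^4 + (snd \<omega> r)^4))"
      unfolding sq using power4_diff_le by simp
  qed
  have "expectation (\<lambda>\<omega>. coord_sq_diff r \<omega> ^ 2) \<le> expectation (\<lambda>\<omega>. 8 * ((fst \<omega> r)^4 + (snd \<omega> r)^4))"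
    using int bound unfolding sq by (intro integral_mono power4_diff_le)
  also have "\<dots> = 8 * ((\<integral>x. (x r)^4 \<partial>M1) + (\<integral>x. (x r)^4 \<partial>M2))"
    using integrable_comp_fst[OF integrable_power4_M1[OF r]] integrable_comp_snd[OF integrable_power4_M2[OF r]]
      integral_comp_fst[OF integrable_power4_M1[OF r]] integral_comp_snd[OF integrable_power4_M2[OF r]]
    by simp
  also have "\<dots> \<le> 16 * C"
    using moment4_M1[OF r] moment4_M2[OF r] by simp
  finally show "expectation (\<lambda>\<omega>. coord_sq_diff r \<omega> ^ 2) \<le> 16 * C" .
qed

lemma var_of_coord_sq_diff_le: "var_of (M1 \<Otimes>\<^sub>M M2) (coord_sq_diff r) \<le> 16 * C"
  using var_of_eq[OF integrable_coord_sq_diff integrable_coord_sq_diff_sq]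
    expectation_coord_sq_diff_sq_le zero_le_power2[of "expectation (coord_sq_diff r)"]
  by linarith

end

lemma pair_sq_dist_eq_sum: "pair_sq_dist = (\<lambda>\<omega>. \<Sum>r<d. coord_sq_diff r \<omega>)"
  using sq_dist_eq_sum_coord_sq_diff by blast

lemma measurable_pair_sq_dist: "pair_sq_dist \<in> borel_measurable (M1 \<Otimes>\<^sub>M M2)"
  using measurable_sq_dist[OF measurable_fst measurable_snd sets_M1 sets_M2] .

lemma integrable_pair_sq_dist_sq: "integrable (M1 \<Otimes>\<^sub>M M2) (\<lambda>\<omega>. pair_sq_dist \<omega> ^ 2)"
  unfolding sq_dist_eq_sum_coord_sq_diff
  using measurable_coord_sq_diff integrable_coord_sq_diff_sq by (intro square_integrable_sum) auto

lemma expectation_pair_sq_dist: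
  "expectation pair_sq_dist
    = trace_disp d M1 + trace_disp d M2 + (\<Sum>r<d. (mean_vec M1 r - mean_vec M2 r)^2)"
  unfolding pair_sq_dist_eq_sum trace_disp_def
  using integrable_coord_sq_diff expectation_coord_sq_diff
  by (simp add: Bochner_Integration.integral_sum sum.distrib)

lemma var_of_pair_sq_dist_le:
  "var_of (M1 \<Otimes>\<^sub>M M2) pair_sq_dist \<le> 16 * C * real d + 16 * C * sq_corr_sum d (M1 \<Otimes>\<^sub>M M2)"
  unfolding pair_sq_dist_eq_sum sq_corr_sum_def
  using var_of_sum_le[of "{..<d}" coord_sq_diff "16 * C"] measurable_coord_sq_diff
    integrable_coord_sq_diff_sq var_of_coord_sq_diff_le
  by simp

lemma prob_normalized_deviation_le:
  assumes "0 < \<epsilon>" "0 < d" and mean: "\<bar>expectation pair_sq_dist / d - \<mu>\<bar> < \<epsilon> / 2"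
  shows "prob {\<omega> \<in> space (M1 \<Otimes>\<^sub>M M2). \<epsilon> < \<bar>pair_sq_dist \<omega> / d - \<mu>\<bar>}
    \<le> 64 * C / \<epsilon>^2 * (1 / d + sq_corr_sum d (M1 \<Otimes>\<^sub>M M2) / (real d)^2)"
proof -
  define a where "a = \<epsilon> * d / 2"
  have a: "0 < a" using assms unfolding a_def by simp
  have "{\<omega> \<in> space (M1 \<Otimes>\<^sub>M M2). \<epsilon> < \<bar>pair_sq_dist \<omega> / d - \<mu>\<bar>}
      \<subseteq> {\<omega> \<in> space (M1 \<Otimes>\<^sub>M M2). a \<le> \<bar>pair_sq_dist \<omega> - expectation pair_sq_dist\<bar>}"
  proof safe
    fix \<omega> assume "\<epsilon> < \<bar>pair_sq_dist \<omega> / d - \<mu>\<bar>"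
    then have "\<epsilon> / 2 < \<bar>pair_sq_dist \<omega> / d - expectation pair_sq_dist / d\<bar>"
      using mean by linarith
    also have "\<dots> = \<bar>pair_sq_dist \<omega> - expectation pair_sq_dist\<bar> / d"
      using \<open>0 < d\<close> by (simp add: diff_divide_distrib[symmetric])
    finally show "a \<le> \<bar>pair_sq_dist \<omega> - expectation pair_sq_dist\<bar>"
      using \<open>0 < d\<close> unfolding a_def by (simp add: field_simps)
  qed
  then have "prob {\<omega> \<in> space (M1 \<Otimes>\<^sub>M M2). \<epsilon> < \<bar>pair_sq_dist \<omega> / d - \<mu>\<bar>}
      \<le> prob {\<omega> \<in> space (M1 \<Otimes>\<^sub>M M2). a \<le> \<bar>pair_sq_dist \<omega> - expectation pair_sq_dist\<bar>}"
    using measurable_pair_sq_dist by (intro finite_measure_mono) measurable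
  also have "\<dots> \<le> var_of (M1 \<Otimes>\<^sub>M M2) pair_sq_dist / a^2"
    unfolding var_of_def
    using Chebyshev_inequality[OF measurable_pair_sq_dist integrable_pair_sq_dist_sq a] by simp
  also have "\<dots> \<le> (16 * C * real d + 16 * C * sq_corr_sum d (M1 \<Otimes>\<^sub>M M2)) / a^2"
    using var_of_pair_sq_dist_le by (intro divide_right_mono) auto
  also have "\<dots> = 64 * C / \<epsilon>^2 * (1 / d + sq_corr_sum d (M1 \<Otimes>\<^sub>M M2) / (real d)^2)"
    using assms unfolding a_def by (simp add: field_simps power2_eq_square)
  finally show ?thesis .
qed

end

lemma sq_dist_concentration:
  fixes M1 M2 :: "nat \<Rightarrow> (nat \<Rightarrow> real) measure"
  assumes pairs: "\<And>d. fourth_moment_pair (M1 d) (M2 d) d C"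
    and corr: "(\<lambda>d. sq_corr_sum d (M1 d \<Otimes>\<^sub>M M2 d) / (real d)^2) \<longlonglongrightarrow> 0"
    and mean: "(\<lambda>d. (trace_disp d (M1 d) + trace_disp d (M2 d)
                  + (\<Sum>r<d. (mean_vec (M1 d) r - mean_vec (M2 d) r)^2)) / real d) \<longlonglongrightarrow> \<mu>"
    and "0 < \<epsilon>"
  shows "(\<lambda>d. measure (M1 d \<Otimes>\<^sub>M M2 d)
           {\<omega> \<in> space (M1 d \<Otimes>\<^sub>M M2 d). \<epsilon> < \<bar>sq_dist d (fst \<omega>) (snd \<omega>) / real d - \<mu>\<bar>})
         \<longlonglongrightarrow> 0"
proof (rule tendsto_sandwich[OF _ _ tendsto_const])
  define B where "B d = 64 * C / \<epsilon>^2 * (1 / real d + sq_corr_sum d (M1 d \<Otimes>\<^sub>M M2 d) / (real d)^2)" for d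
  have "B \<longlonglongrightarrow> 64 * C / \<epsilon>^2 * (0 + 0)"
    unfolding B_def by (intro tendsto_intros lim_1_over_n corr)
  then show "B \<longlonglongrightarrow> 0" by simp
  have "\<forall>\<^sub>F d in sequentially. \<bar>(\<integral>\<omega>. sq_dist d (fst \<omega>) (snd \<omega>) \<partial>(M1 d \<Otimes>\<^sub>M M2 d)) / d - \<mu>\<bar> < \<epsilon> / 2"
    using order_tendstoD[OF tendsto_norm_zero[OF LIM_zero[OF mean]], of "\<epsilon> / 2"] \<open>0 < \<epsilon>\<close>
    by (simp add: fourth_moment_pair.expectation_pair_sq_dist[OF pairs])
  then show "\<forall>\<^sub>F d in sequentially. measure (M1 d \<Otimes>\<^sub>M M2 d)
      {\<omega> \<in> space (M1 d \<Otimes>\<^sub>M M2 d). \<epsilon> < \<bar>sq_dist d (fst \<omega>) (snd \<omega>) / real d - \<mu>\<bar>} \<le> B d"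
    using eventually_gt_at_top[of 0]
    by eventually_elim (use fourth_moment_pair.prob_normalized_deviation_le[OF pairs _ _ _] \<open>0 < \<epsilon>\<close>
        in \<open>auto simp: B_def\<close>)
qed simp

lemma measure_UN_tendsto_0:
  fixes A :: "nat \<Rightarrow> 'i \<Rightarrow> 'a set"
  assumes "finite I" and "\<And>d i. i \<in> I \<Longrightarrow> A d i \<in> sets (M d)"
    and "\<And>i. i \<in> I \<Longrightarrow> (\<lambda>d. measure (M d) (A d i)) \<longlonglongrightarrow> 0"
  shows "(\<lambda>d. measure (M d) (\<Union>i\<in>I. A d i)) \<longlonglongrightarrow> 0"
proof (rule tendsto_sandwich[OF _ _ tendsto_const])
  show "(\<lambda>d. \<Sum>i\<in>I. measure (M d) (A d i)) \<longlonglongrightarrow> 0"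
    using assms(3) by (rule tendsto_null_sum)
  show "\<forall>\<^sub>F d in sequentially. measure (M d) (\<Union>i\<in>I. A d i) \<le> (\<Sum>i\<in>I. measure (M d) (A d i))"
    using assms(1,2) by (intro always_eventually allI measure_UNION_le) auto
qed simp

lemma measure_Un_tendsto_0:
  assumes "\<And>d. A d \<in> sets (M d)" "\<And>d. B d \<in> sets (M d)"
    and "(\<lambda>d. measure (M d) (A d)) \<longlonglongrightarrow> 0" "(\<lambda>d. measure (M d) (B d)) \<longlonglongrightarrow> 0"
  shows "(\<lambda>d. measure (M d) (A d \<union> B d)) \<longlonglongrightarrow> 0"
proof (rule tendsto_sandwich[OF _ _ tendsto_const])
  show "(\<lambda>d. measure (M d) (A d) + measure (M d) (B d)) \<longlonglongrightarrow> 0"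
    using tendsto_add_zero[OF assms(3,4)] .
  show "\<forall>\<^sub>F d in sequentially. measure (M d) (A d \<union> B d) \<le> measure (M d) (A d) + measure (M d) (B d)"
    using assms(1,2) by (intro always_eventually allI measure_Un_le)
qed simp

lemma distr_test_train_pair:
  fixes M :: "'i \<Rightarrow> 'a measure"
  assumes M: "\<And>i. i \<in> I \<Longrightarrow> prob_space (M i)" and "prob_space N" and p: "p \<in> I"
  shows "distr (PiM I M \<Otimes>\<^sub>M N) (N \<Otimes>\<^sub>M M p) (\<lambda>\<omega>. (snd \<omega>, fst \<omega> p)) = N \<Otimes>\<^sub>M M p"
proof -
  interpret N: prob_space N by fact
  interpret Mp: prob_space "M p" using M p .
  interpret Pi: prob_space "PiM I M" using M by (intro prob_space_PiM) auto
  have g: "(\<lambda>\<omega>. (snd \<omega>, fst \<omega> p)) \<in> measurable (PiM I M \<Otimes>\<^sub>M N) (N \<Otimes>\<^sub>M M p)"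
    using p by measurable
  show ?thesis
  proof (rule pair_measure_eqI[symmetric])
    show "sigma_finite_measure N" "sigma_finite_measure (M p)" by unfold_locales
    fix A B assume A: "A \<in> sets N" and B: "B \<in> sets (M p)"
    have preimage: "(\<lambda>\<omega>. (snd \<omega>, fst \<omega> p)) -` (A \<times> B) \<inter> space (PiM I M \<Otimes>\<^sub>M N)
        = {x \<in> space (PiM I M). x p \<in> B} \<times> A"
      using A[THEN sets.sets_into_space] by (auto simp: space_pair_measure)
    have component: "emeasure (PiM I M) {x \<in> space (PiM I M). x p \<in> B} = emeasure (M p) B"
    proof -
      have "emeasure (M p) B = emeasure (distr (PiM I M) (M p) (\<lambda>x. x p)) B"
        using distr_PiM_component[of I M p, OF M p] by simp
      also have "\<dots> = emeasure (PiM I M) ((\<lambda>x. x p) -` B \<inter> space (PiM I M))"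
        using B p by (intro emeasure_distr) auto
      finally show ?thesis by (simp add: Int_def conj_commute)
    qed
    have "emeasure (distr (PiM I M \<Otimes>\<^sub>M N) (N \<Otimes>\<^sub>M M p) (\<lambda>\<omega>. (snd \<omega>, fst \<omega> p))) (A \<times> B)
        = emeasure (PiM I M \<Otimes>\<^sub>M N) ({x \<in> space (PiM I M). x p \<in> B} \<times> A)"
      using A B g by (subst emeasure_distr) (auto simp: preimage)
    also have "\<dots> = emeasure N A * emeasure (M p) B"
      using p A B by (subst N.emeasure_pair_measure_Times) (auto simp: component mult.commute)
    finally show "emeasure N A * emeasure (M p) B
      = emeasure (distr (PiM I M \<Otimes>\<^sub>M N) (N \<Otimes>\<^sub>M M p) (\<lambda>\<omega>. (snd \<omega>, fst \<omega> p))) (A \<times> B)" ..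
  qed simp
qed

lemma distr_train_train_pair:
  fixes M :: "'i \<Rightarrow> 'a measure"
  assumes M: "\<And>i. i \<in> I \<Longrightarrow> prob_space (M i)" and "prob_space N"
    and p: "p \<in> I" and q: "q \<in> I" and "p \<noteq> q"
  shows "distr (PiM I M \<Otimes>\<^sub>M N) (M p \<Otimes>\<^sub>M M q) (\<lambda>\<omega>. (fst \<omega> p, fst \<omega> q)) = M p \<Otimes>\<^sub>M M q"
proof -
  interpret N: prob_space N by fact
  interpret Mp: prob_space "M p" using M p .
  interpret Mq: prob_space "M q" using M q .
  have g: "(\<lambda>\<omega>. (fst \<omega> p, fst \<omega> q)) \<in> measurable (PiM I M \<Otimes>\<^sub>M N) (M p \<Otimes>\<^sub>M M q)"
    using p q by measurable
  show ?thesis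
  proof (rule pair_measure_eqI[symmetric])
    show "sigma_finite_measure (M p)" "sigma_finite_measure (M q)" by unfold_locales
    fix A B assume A: "A \<in> sets (M p)" and B: "B \<in> sets (M q)"
    define X where "X = prod_emb I M {p, q} (PiE {p, q} (\<lambda>i. if i = p then A else B))"
    have X: "X \<in> sets (PiM I M)"
      unfolding X_def using p q A B by (intro sets_PiM_I) auto
    have "X = {x \<in> space (PiM I M). x p \<in> A \<and> x q \<in> B}"
      unfolding X_def prod_emb_def space_PiM using \<open>p \<noteq> q\<close> by (auto simp: restrict_PiE_iff)
    then have preimage:
      "(\<lambda>\<omega>. (fst \<omega> p, fst \<omega> q)) -` (A \<times> B) \<inter> space (PiM I M \<Otimes>\<^sub>M N) = X \<times> space N"
      by (auto simp: space_pair_measure)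
    have "emeasure (PiM I M) X = (\<Prod>i\<in>{p, q}. emeasure (M i) (if i = p then A else B))"
      unfolding X_def using p q A B M by (intro emeasure_PiM_emb) auto
    then have emeasure_X: "emeasure (PiM I M) X = emeasure (M p) A * emeasure (M q) B"
      using \<open>p \<noteq> q\<close> by simp
    have "emeasure (distr (PiM I M \<Otimes>\<^sub>M N) (M p \<Otimes>\<^sub>M M q) (\<lambda>\<omega>. (fst \<omega> p, fst \<omega> q))) (A \<times> B)
        = emeasure (PiM I M \<Otimes>\<^sub>M N) (X \<times> space N)"
      using A B g by (subst emeasure_distr) (auto simp: preimage)
    also have "\<dots> = emeasure (M p) A * emeasure (M q) B"
      using X by (simp add: N.emeasure_pair_measure_Times N.emeasure_space_1 emeasure_X)
    finally show "emeasure (M p) A * emeasure (M q) B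
      = emeasure (distr (PiM I M \<Otimes>\<^sub>M N) (M p \<Otimes>\<^sub>M M q) (\<lambda>\<omega>. (fst \<omega> p, fst \<omega> q))) (A \<times> B)" ..
  qed simp
qed

lemma measure_pred_eq_of_distr_eq:
  assumes g: "g \<in> measurable M N" and "distr M N g = N" and "{x \<in> space N. P x} \<in> sets N"
  shows "measure M {\<omega> \<in> space M. P (g \<omega>)} = measure N {x \<in> space N. P x}"
proof -
  have "measure N {x \<in> space N. P x} = measure M (g -` {x \<in> space N. P x} \<inter> space M)"
    using measure_distr[OF g assms(3)] assms(2) by simp
  also have "g -` {x \<in> space N. P x} \<inter> space M = {\<omega> \<in> space M. P (g \<omega>)}"
    using measurable_space[OF g] by auto
  finally show ?thesis by simp
qed

section \<open>The classifiers on fixed data\<close>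

lemma finite_train_idx: "finite (train_idx J n)"
  by (rule finite_subset[of _ "Sigma {..<J} (\<lambda>c. {..<n c})"]) (auto simp: train_idx_def)

lemma train_idx_iff: "(c, i) \<in> train_idx J n \<longleftrightarrow> c < J \<and> i < n c"
  unfolding train_idx_def by simp

lemma knn_set_member_class:
  assumes S: "knn_set d J n k x z S" and c: "c < J" "k \<le> n c" and q: "q \<in> S"
    and nearer: "\<And>p. p \<in> train_idx J n \<Longrightarrow> fst p = c \<Longrightarrow> eucl_dist d z (x p) < eucl_dist d z (x q)"
  shows "fst q = c"
proof (rule ccontr)
  assume qc: "fst q \<noteq> c"
  have S_sub: "S \<subseteq> train_idx J n" and card_S: "card S = k"
    and S_nearest: "\<And>p p'. p \<in> S \<Longrightarrow> p' \<in> train_idx J n - S \<Longrightarrow> eucl_dist d z (x p) \<le> eucl_dist d z (x p')"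
    using S unfolding knn_set_def by auto
  have "\<not> Pair c ` {..<n c} \<subseteq> S"
  proof
    assume "Pair c ` {..<n c} \<subseteq> S"
    then have "insert q (Pair c ` {..<n c}) \<subseteq> S" using q by simp
    then have "card (insert q (Pair c ` {..<n c})) \<le> card S"
      using S_sub finite_train_idx by (intro card_mono) (auto intro: finite_subset)
    moreover have "card (insert q (Pair c ` {..<n c})) = n c + 1"
      using qc by (subst card_insert_disjoint) (auto simp: card_image inj_on_def)
    ultimately show False using card_S c by simp
  qed
  then obtain i where i: "i < n c" "(c, i) \<notin> S" by auto
  then have "eucl_dist d z (x q) \<le> eucl_dist d z (x (c, i))"
    using S_nearest[OF q] c by (simp add: train_idx_iff)
  moreover have "eucl_dist d z (x (c, i)) < eucl_dist d z (x q)"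
    using nearer i c by (simp add: train_idx_iff)
  ultimately show False by simp
qed

lemma knn_assigns_if_own_class_nearer:
  assumes j: "j < J" and k: "1 \<le> k" "k \<le> n j"
    and nearer: "\<And>p q. p \<in> train_idx J n \<Longrightarrow> q \<in> train_idx J n \<Longrightarrow> fst p = j \<Longrightarrow> fst q \<noteq> j
                   \<Longrightarrow> eucl_dist d z (x p) < eucl_dist d z (x q)"
  shows "knn_assigns d J n k x z j"
  unfolding knn_assigns_def
proof (intro conjI j allI impI)
  fix S c assume S: "knn_set d J n k x z S" and c: "c < J" "c \<noteq> j"
  have S_sub: "S \<subseteq> train_idx J n" and card_S: "card S = k"
    using S unfolding knn_set_def by auto
  have own: "fst q = j" if q: "q \<in> S" for q
  proof (rule ccontr)
    assume "fst q \<noteq> j"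
    then show False
      using knn_set_member_class[OF S j k(2) q] nearer q S_sub by blast
  qed
  then have own_class: "{p \<in> S. fst p = j} = S" and other_class: "{p \<in> S. fst p = c} = {}"
    using c by auto
  have "votes S j = k" "votes S c = 0"
    unfolding votes_def own_class other_class card_S by simp_all
  then show "votes S c < votes S j" using k by simp
qed

lemma not_knn_may_assign_if_other_class_nearer:
  assumes i: "i < J" "i \<noteq> j" and k: "1 \<le> k" "k \<le> n i"
    and nearer: "\<And>p q. p \<in> train_idx J n \<Longrightarrow> q \<in> train_idx J n \<Longrightarrow> fst p = i \<Longrightarrow> fst q = j
                   \<Longrightarrow> eucl_dist d z (x p) < eucl_dist d z (x q)"
  shows "\<not> knn_may_assign d J n k x z j"
proof
  assume "knn_may_assign d J n k x z j"
  then obtain S where S: "knn_set d J n k x z S" and majority: "\<And>c. c < J \<Longrightarrow> votes S c \<le> votes S j"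
    unfolding knn_may_assign_def by auto
  have S_sub: "S \<subseteq> train_idx J n" and card_S: "card S = k"
    using S unfolding knn_set_def by auto
  have "fst q \<noteq> j" if q: "q \<in> S" for q
    using knn_set_member_class[OF S i(1) k(2) q] nearer q S_sub i(2) by blast
  then have no_own: "{p \<in> S. fst p = j} = {}"
    by auto
  have "votes S j = 0"
    unfolding votes_def no_own by simp
  moreover have "S \<noteq> {}"
    using card_S k by auto
  then obtain q where q: "q \<in> S"
    by blast
  moreover have "finite S"
    using S_sub finite_train_idx by (rule finite_subset)
  then have "0 < votes S (fst q)"
    unfolding votes_def using q by (auto simp: card_gt_0_iff intro!: exI[of _ "snd q"])
  moreover have "fst q < J"
    using q S_sub by (auto simp: train_idx_def)
  ultimately show False
    using majority by fastforce
qed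

lemma gen_assigns_if_separated:
  fixes \<delta> :: "(nat \<Rightarrow> real) \<Rightarrow> (nat \<Rightarrow> real) \<Rightarrow> real" and hi :: real and lo w_lo w_hi :: "nat \<Rightarrow> real"
  assumes j: "j < J" and n2: "\<And>c. c < J \<Longrightarrow> 2 \<le> n c"
    and own: "\<And>i. i < n j \<Longrightarrow> \<delta> z (x (j, i)) \<le> hi"
    and other: "\<And>c i. c < J \<Longrightarrow> c \<noteq> j \<Longrightarrow> i < n c \<Longrightarrow> lo c \<le> \<delta> z (x (c, i))"
    and within: "\<And>c s t. c < J \<Longrightarrow> s < t \<Longrightarrow> t < n c
                   \<Longrightarrow> w_lo c \<le> \<delta> (x (c, s)) (x (c, t)) \<and> \<delta> (x (c, s)) (x (c, t)) \<le> w_hi c"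
    and gap: "\<And>c. c < J \<Longrightarrow> c \<noteq> j \<Longrightarrow> hi - w_lo j / 2 < lo c - w_hi c / 2"
  shows "gen_assigns \<delta> J n x z j"
proof -
  define avg where "avg c = (\<Sum>t<n c. \<Sum>s<t. \<delta> (x (c, s)) (x (c, t))) / real (n c choose 2)" for c
  have rho: "rho_gen \<delta> n x z c i = \<delta> z (x (c, i)) - avg c / 2" for c i
    unfolding rho_gen_def avg_def by simp
  have avg: "w_lo c \<le> avg c" "avg c \<le> w_hi c" if "c < J" for c
    unfolding avg_def using average_of_pairs_bounds[OF n2[OF that] within[OF that]] by simp_all
  have "min_rho \<delta> n x z j \<le> rho_gen \<delta> n x z j 0"
    unfolding min_rho_def using n2[OF j] by (intro Min_le) auto
  also have "\<dots> \<le> hi - w_lo j / 2"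
    unfolding rho using own[of 0] avg(1)[OF j] n2[OF j] by simp
  finally have min_own: "min_rho \<delta> n x z j \<le> hi - w_lo j / 2" .
  have "lo c - w_hi c / 2 \<le> min_rho \<delta> n x z c" if c: "c < J" "c \<noteq> j" for c
    unfolding min_rho_def
  proof (intro Min.boundedI)
    show "(\<lambda>i. rho_gen \<delta> n x z c i) ` {..<n c} \<noteq> {}"
      using n2[OF c(1)] by (auto simp: lessThan_empty_iff)
    show "lo c - w_hi c / 2 \<le> r" if "r \<in> (\<lambda>i. rho_gen \<delta> n x z c i) ` {..<n c}" for r
      using that other[OF c] avg(2)[OF c(1)] unfolding rho by force
  qed simp
  then show ?thesis
    unfolding gen_assigns_def using j min_own gap by fastforce
qed

lemma pred_all_knn_sets:
  assumes "\<And>p. p \<in> train_idx J n \<Longrightarrow> (\<lambda>\<omega>. eucl_dist d (snd \<omega>) (fst \<omega> p)) \<in> borel_measurable M"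
  shows "Measurable.pred M (\<lambda>\<omega>. \<forall>S. knn_set d J n k (fst \<omega>) (snd \<omega>) S \<longrightarrow> R S)"
proof -
  have "(\<forall>S. knn_set d J n k (fst \<omega>) (snd \<omega>) S \<longrightarrow> R S) \<longleftrightarrow>
      (\<forall>S \<in> Pow (train_idx J n). card S = k \<and>
        (\<forall>p\<in>S. \<forall>q\<in>train_idx J n - S. eucl_dist d (snd \<omega>) (fst \<omega> p) \<le> eucl_dist d (snd \<omega>) (fst \<omega> q))
        \<longrightarrow> R S)" for \<omega>
    unfolding knn_set_def by auto
  moreover have "Measurable.pred M (\<lambda>\<omega>. \<forall>S \<in> Pow (train_idx J n). card S = k \<and>
        (\<forall>p\<in>S. \<forall>q\<in>train_idx J n - S. eucl_dist d (snd \<omega>) (fst \<omega> p) \<le> eucl_dist d (snd \<omega>) (fst \<omega> q))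
        \<longrightarrow> R S)"
  proof (intro pred_intros_finite pred_intros_imp' pred_intros_logic pred_intros_conj1')
    fix S p q assume "S \<in> Pow (train_idx J n)" "p \<in> S" "q \<in> train_idx J n - S"
    then have "p \<in> train_idx J n" "q \<in> train_idx J n" by auto
    then show "Measurable.pred M (\<lambda>\<omega>. eucl_dist d (snd \<omega>) (fst \<omega> p) \<le> eucl_dist d (snd \<omega>) (fst \<omega> q))"
      unfolding pred_def by (intro borel_measurable_le assms)
  qed (auto intro: finite_train_idx finite_subset)
  ultimately show ?thesis by simp
qed

lemma pred_gen_assigns:
  assumes j: "j < J"
    and test: "\<And>p. p \<in> train_idx J n \<Longrightarrow> (\<lambda>\<omega>. \<delta> (snd \<omega>) (fst \<omega> p)) \<in> borel_measurable M"
    and train: "\<And>p q. p \<in> train_idx J n \<Longrightarrow> q \<in> train_idx J n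
                  \<Longrightarrow> (\<lambda>\<omega>. \<delta> (fst \<omega> p) (fst \<omega> q)) \<in> borel_measurable M"
  shows "Measurable.pred M (\<lambda>\<omega>. gen_assigns \<delta> J n (fst \<omega>) (snd \<omega>) j)"
proof -
  have rho: "(\<lambda>\<omega>. rho_gen \<delta> n (fst \<omega>) (snd \<omega>) c i) \<in> borel_measurable M"
    if "c < J" "i < n c" for c i
  proof -
    have "(\<lambda>\<omega>. \<Sum>t<n c. \<Sum>s<t. \<delta> (fst \<omega> (c, s)) (fst \<omega> (c, t))) \<in> borel_measurable M"
      using that by (intro borel_measurable_sum train) (auto simp: train_idx_iff)
    then show ?thesis
      unfolding rho_gen_def using test[of "(c, i)"] that by (simp add: train_idx_iff)
  qed
  have min_rho: "(\<lambda>\<omega>. min_rho \<delta> n (fst \<omega>) (snd \<omega>) c) \<in> borel_measurable M" if "c < J" for c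
    unfolding min_rho_def using rho that by (intro borel_measurable_Min) auto
  have eq: "gen_assigns \<delta> J n (fst \<omega>) (snd \<omega>) j \<longleftrightarrow> (\<forall>c\<in>{..<J}. c \<noteq> j \<longrightarrow>
      min_rho \<delta> n (fst \<omega>) (snd \<omega>) j < min_rho \<delta> n (fst \<omega>) (snd \<omega>) c)" for \<omega>
    unfolding gen_assigns_def using j by auto
  show ?thesis
    unfolding eq using j
    by (intro pred_intros_finite pred_intros_imp')
      (auto simp: pred_def intro!: borel_measurable_less min_rho)
qed

section \<open>The high-dimensional limit\<close>

locale hdlss_classes =
  fixes J :: nat and n :: "nat \<Rightarrow> nat"
    and F :: "nat \<Rightarrow> nat \<Rightarrow> (nat \<Rightarrow> real) measure"
    and sigma2 :: "nat \<Rightarrow> real" and nu2 :: "nat \<Rightarrow> nat \<Rightarrow> real"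
  assumes n2: "\<And>j. j < J \<Longrightarrow> 2 \<le> n j"
    and prob: "\<And>d j. j < J \<Longrightarrow> prob_space (F d j)"
    and sets_F: "\<And>d j. j < J \<Longrightarrow> sets (F d j) = sets (vec_space d)"
    and moment4: "\<exists>C. \<forall>d j r. j < J \<longrightarrow> r < d \<longrightarrow>
               integrable (F d j) (\<lambda>x. (x r)^4) \<and> (\<integral>x. (x r)^4 \<partial>(F d j)) \<le> C"
    and sq_corr: "\<And>j i. j < J \<Longrightarrow> i < J \<Longrightarrow> (\<lambda>d. sq_corr_sum d (F d j \<Otimes>\<^sub>M F d i) / (real d)^2) \<longlonglongrightarrow> 0"
    and trace: "\<And>j. j < J \<Longrightarrow> (\<lambda>d. trace_disp d (F d j) / real d) \<longlonglongrightarrow> sigma2 j"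
    and mean_gap: "\<And>j i. j < J \<Longrightarrow> i < J \<Longrightarrow> j \<noteq> i \<Longrightarrow>
               (\<lambda>d. (\<Sum>r<d. (mean_vec (F d j) r - mean_vec (F d i) r)^2) / real d) \<longlonglongrightarrow> nu2 j i"
begin

abbreviation joint :: "nat \<Rightarrow> nat \<Rightarrow> ((nat \<times> nat \<Rightarrow> nat \<Rightarrow> real) \<times> (nat \<Rightarrow> real)) measure" where
  "joint d j \<equiv> train_test J n (F d) j"

(* The limit in probability of |X - Y|^2 / d for independent X ~ F_a, Y ~ F_b. *)
definition lim_sq_dist :: "nat \<Rightarrow> nat \<Rightarrow> real" where
  "lim_sq_dist a b = sigma2 a + sigma2 b + (if a = b then 0 else nu2 a b)"

lemma sigma2_nonneg: "j < J \<Longrightarrow> 0 \<le> sigma2 j"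
  by (erule LIMSEQ_le_const[OF trace])
    (auto simp: trace_disp_def intro!: divide_nonneg_nonneg sum_nonneg var_of_nonneg)

lemma nu2_nonneg: "j < J \<Longrightarrow> i < J \<Longrightarrow> j \<noteq> i \<Longrightarrow> 0 \<le> nu2 j i"
  by (rule LIMSEQ_le_const[OF mean_gap]) (auto intro!: divide_nonneg_nonneg sum_nonneg)

lemma nu2_commute:
  assumes "j < J" "i < J" "j \<noteq> i"
  shows "nu2 j i = nu2 i j"
proof (rule LIMSEQ_unique[OF mean_gap[OF assms]])
  show "(\<lambda>d. (\<Sum>r<d. (mean_vec (F d j) r - mean_vec (F d i) r)^2) / real d) \<longlonglongrightarrow> nu2 i j"
    using mean_gap[of i j] assms by (simp add: power2_commute)
qed

lemma lim_sq_dist_nonneg: "a < J \<Longrightarrow> b < J \<Longrightarrow> 0 \<le> lim_sq_dist a b"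
  unfolding lim_sq_dist_def using sigma2_nonneg nu2_nonneg by auto

lemma mean_sq_dist_tendsto:
  assumes "a < J" "b < J"
  shows "(\<lambda>d. (trace_disp d (F d a) + trace_disp d (F d b)
            + (\<Sum>r<d. (mean_vec (F d a) r - mean_vec (F d b) r)^2)) / real d) \<longlonglongrightarrow> lim_sq_dist a b"
proof (cases "a = b")
  case True
  then show ?thesis
    using tendsto_add[OF trace[OF assms(1)] trace[OF assms(2)]]
    by (simp add: lim_sq_dist_def add_divide_distrib)
next
  case False
  then show ?thesis
    using tendsto_add[OF tendsto_add[OF trace[OF assms(1)] trace[OF assms(2)]] mean_gap[OF assms False]]
    by (simp add: lim_sq_dist_def add_divide_distrib)
qed

lemma sq_dist_pair_concentration:
  assumes "a < J" "b < J" "0 < \<epsilon>"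
  shows "(\<lambda>d. measure (F d a \<Otimes>\<^sub>M F d b) {\<omega> \<in> space (F d a \<Otimes>\<^sub>M F d b).
            \<epsilon> < \<bar>sq_dist d (fst \<omega>) (snd \<omega>) / real d - lim_sq_dist a b\<bar>}) \<longlonglongrightarrow> 0"
proof -
  obtain C where C: "\<And>d j r. j < J \<Longrightarrow> r < d \<Longrightarrow>
      integrable (F d j) (\<lambda>x. (x r)^4) \<and> (\<integral>x. (x r)^4 \<partial>(F d j)) \<le> C"
    using moment4 by blast
  have pairs: "fourth_moment_pair (F d a) (F d b) d C" for d
  proof (intro fourth_moment_pair.intro fourth_moment_pair_axioms.intro)
    show "pair_prob_space (F d a) (F d b)"
      using prob assms by (simp add: pair_prob_space_def pair_sigma_finite_def prob_space_imp_sigma_finite)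
  qed (use C sets_F assms in simp_all)
  show ?thesis
    by (rule sq_dist_concentration[OF pairs sq_corr[OF assms(1,2)] mean_sq_dist_tendsto[OF assms(1,2)] assms(3)])
qed

lemma prob_space_joint: "j < J \<Longrightarrow> prob_space (joint d j)"
  unfolding train_test_def
  by (intro prob_space_pair prob_space_PiM prob) (auto simp: train_idx_def)

lemma measurable_train_point:
  "p \<in> train_idx J n \<Longrightarrow> (\<lambda>\<omega>. fst \<omega> p) \<in> measurable (joint d j) (F d (fst p))"
  unfolding train_test_def by measurable

lemma measurable_test_point: "snd \<in> measurable (joint d j) (F d j)"
  unfolding train_test_def by simp

lemma measurable_test_sq_dist:
  "j < J \<Longrightarrow> p \<in> train_idx J n \<Longrightarrow> (\<lambda>\<omega>. sq_dist d (snd \<omega>) (fst \<omega> p)) \<in> borel_measurable (joint d j)"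
  by (rule measurable_sq_dist[OF measurable_test_point measurable_train_point sets_F sets_F])
    (auto simp: train_idx_def)

lemma measurable_train_sq_dist:
  "p \<in> train_idx J n \<Longrightarrow> q \<in> train_idx J n
    \<Longrightarrow> (\<lambda>\<omega>. sq_dist d (fst \<omega> p) (fst \<omega> q)) \<in> borel_measurable (joint d j)"
  by (rule measurable_sq_dist[OF measurable_train_point measurable_train_point sets_F sets_F])
    (auto simp: train_idx_def)

definition deviation ::
  "nat \<Rightarrow> nat \<Rightarrow> real \<Rightarrow> real \<Rightarrow> ((nat \<times> nat \<Rightarrow> nat \<Rightarrow> real) \<times> (nat \<Rightarrow> real) \<Rightarrow> nat \<Rightarrow> real)
    \<Rightarrow> ((nat \<times> nat \<Rightarrow> nat \<Rightarrow> real) \<times> (nat \<Rightarrow> real) \<Rightarrow> nat \<Rightarrow> real)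
    \<Rightarrow> ((nat \<times> nat \<Rightarrow> nat \<Rightarrow> real) \<times> (nat \<Rightarrow> real)) set" where
  "deviation d j \<epsilon> \<mu> U V = {\<omega> \<in> space (joint d j). \<epsilon> < \<bar>sq_dist d (U \<omega>) (V \<omega>) / real d - \<mu>\<bar>}"

lemma deviation_tendsto_0:
  assumes "a < J" "b < J" "0 < \<epsilon>"
    and UV: "\<And>d. (\<lambda>\<omega>. (U d \<omega>, V d \<omega>)) \<in> measurable (joint d j) (F d a \<Otimes>\<^sub>M F d b)"
    and law: "\<And>d. distr (joint d j) (F d a \<Otimes>\<^sub>M F d b) (\<lambda>\<omega>. (U d \<omega>, V d \<omega>)) = F d a \<Otimes>\<^sub>M F d b"
  shows "(\<lambda>d. measure (joint d j) (deviation d j \<epsilon> (lim_sq_dist a b) (U d) (V d))) \<longlonglongrightarrow> 0"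
proof -
  have "{\<omega> \<in> space (F d a \<Otimes>\<^sub>M F d b). \<epsilon> < \<bar>sq_dist d (fst \<omega>) (snd \<omega>) / real d - lim_sq_dist a b\<bar>}
      \<in> sets (F d a \<Otimes>\<^sub>M F d b)" for d
    using measurable_sq_dist[OF measurable_fst measurable_snd sets_F[OF assms(1)] sets_F[OF assms(2)]]
    by measurable
  from measure_pred_eq_of_distr_eq[OF UV law this]
  show ?thesis
    unfolding deviation_def using sq_dist_pair_concentration[OF assms(1-3)] by simp
qed

lemma test_deviation_tendsto_0:
  assumes j: "j < J" and p: "p \<in> train_idx J n" and "0 < \<epsilon>"
  shows "(\<lambda>d. measure (joint d j) (deviation d j \<epsilon> (lim_sq_dist j (fst p)) snd (\<lambda>\<omega>. fst \<omega> p))) \<longlonglongrightarrow> 0"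
proof (rule deviation_tendsto_0[where U = "\<lambda>_. snd"])
  show "fst p < J" using p by (auto simp: train_idx_def)
  show "(\<lambda>\<omega>. (snd \<omega>, fst \<omega> p)) \<in> measurable (joint d j) (F d j \<Otimes>\<^sub>M F d (fst p))" for d
    using measurable_test_point measurable_train_point[OF p] by (rule measurable_Pair)
  show "distr (joint d j) (F d j \<Otimes>\<^sub>M F d (fst p)) (\<lambda>\<omega>. (snd \<omega>, fst \<omega> p)) = F d j \<Otimes>\<^sub>M F d (fst p)" for d
    unfolding train_test_def using prob j p
    by (intro distr_test_train_pair[where M="\<lambda>p. F d (fst p)"]) (auto simp: train_idx_def)
qed (use j \<open>0 < \<epsilon>\<close> in auto)

lemma train_deviation_tendsto_0:
  assumes j: "j < J" and p: "p \<in> train_idx J n" and q: "q \<in> train_idx J n"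
    and same: "fst q = fst p" and "p \<noteq> q" and "0 < \<epsilon>"
  shows "(\<lambda>d. measure (joint d j)
           (deviation d j \<epsilon> (lim_sq_dist (fst p) (fst p)) (\<lambda>\<omega>. fst \<omega> p) (\<lambda>\<omega>. fst \<omega> q))) \<longlonglongrightarrow> 0"
proof (rule deviation_tendsto_0)
  show "fst p < J" using p by (auto simp: train_idx_def)
  show "(\<lambda>\<omega>. (fst \<omega> p, fst \<omega> q)) \<in> measurable (joint d j) (F d (fst p) \<Otimes>\<^sub>M F d (fst p))" for d
    using measurable_train_point[OF p] measurable_train_point[OF q] same by (auto intro: measurable_Pair)
  show "distr (joint d j) (F d (fst p) \<Otimes>\<^sub>M F d (fst p)) (\<lambda>\<omega>. (fst \<omega> p, fst \<omega> q))
      = F d (fst p) \<Otimes>\<^sub>M F d (fst p)" for d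
  proof -
    have "distr (PiM (train_idx J n) (\<lambda>p. F d (fst p)) \<Otimes>\<^sub>M F d j) (F d (fst p) \<Otimes>\<^sub>M F d (fst q))
        (\<lambda>\<omega>. (fst \<omega> p, fst \<omega> q)) = F d (fst p) \<Otimes>\<^sub>M F d (fst q)"
      by (rule distr_train_train_pair[OF _ prob[OF j] p q \<open>p \<noteq> q\<close>])
        (use prob in \<open>auto simp: train_idx_def\<close>)
    then show ?thesis
      unfolding train_test_def same .
  qed
qed (use p \<open>0 < \<epsilon>\<close> in \<open>auto simp: train_idx_def\<close>)

definition mates :: "nat \<times> nat \<Rightarrow> (nat \<times> nat) set" where
  "mates p = {q \<in> train_idx J n. fst q = fst p \<and> p \<noteq> q}"

definition concentrated :: "nat \<Rightarrow> nat \<Rightarrow> real \<Rightarrow> ((nat \<times> nat \<Rightarrow> nat \<Rightarrow> real) \<times> (nat \<Rightarrow> real)) set" where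
  "concentrated d j \<epsilon> = space (joint d j) -
     ((\<Union>p \<in> train_idx J n. deviation d j \<epsilon> (lim_sq_dist j (fst p)) snd (\<lambda>\<omega>. fst \<omega> p)) \<union>
      (\<Union>p \<in> train_idx J n. \<Union>q \<in> mates p.
         deviation d j \<epsilon> (lim_sq_dist (fst p) (fst p)) (\<lambda>\<omega>. fst \<omega> p) (\<lambda>\<omega>. fst \<omega> q)))"

lemma prob_concentrated_tendsto_1:
  assumes j: "j < J" and "0 < \<epsilon>"
  shows "(\<lambda>d. measure (joint d j) (concentrated d j \<epsilon>)) \<longlonglongrightarrow> 1"
proof -
  define test_dev where "test_dev d p = deviation d j \<epsilon> (lim_sq_dist j (fst p)) snd (\<lambda>\<omega>. fst \<omega> p)" for d p
  define train_dev where
    "train_dev d p q = deviation d j \<epsilon> (lim_sq_dist (fst p) (fst p)) (\<lambda>\<omega>. fst \<omega> p) (\<lambda>\<omega>. fst \<omega> q)" for d p q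
  define bad where
    "bad d = (\<Union>p \<in> train_idx J n. test_dev d p) \<union> (\<Union>p \<in> train_idx J n. \<Union>q \<in> mates p. train_dev d p q)" for d
  have mate: "q \<in> train_idx J n" "fst q = fst p" "p \<noteq> q" if "q \<in> mates p" for p q
    using that unfolding mates_def by simp_all
  have finite_mates: "finite (mates p)" for p
    unfolding mates_def using finite_train_idx by simp
  have sets_test: "test_dev d p \<in> sets (joint d j)" if "p \<in> train_idx J n" for d p
    unfolding test_dev_def deviation_def using measurable_test_sq_dist[OF j that] by measurable
  have sets_train: "train_dev d p q \<in> sets (joint d j)" if "p \<in> train_idx J n" "q \<in> mates p" for d p q
    unfolding train_dev_def deviation_def using measurable_train_sq_dist[OF that(1) mate(1)[OF that(2)]]
    by measurable
  have "(\<lambda>d. measure (joint d j) (test_dev d p)) \<longlonglongrightarrow> 0" if "p \<in> train_idx J n" for p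
    unfolding test_dev_def using j that \<open>0 < \<epsilon>\<close> by (rule test_deviation_tendsto_0)
  moreover have "(\<lambda>d. measure (joint d j) (train_dev d p q)) \<longlonglongrightarrow> 0"
    if "p \<in> train_idx J n" "q \<in> mates p" for p q
    unfolding train_dev_def using j that(1) mate[OF that(2)] \<open>0 < \<epsilon>\<close> by (rule train_deviation_tendsto_0)
  ultimately have "(\<lambda>d. measure (joint d j) (bad d)) \<longlonglongrightarrow> 0"
    unfolding bad_def using finite_train_idx finite_mates sets_test sets_train
    by (intro measure_Un_tendsto_0 measure_UN_tendsto_0 sets.finite_UN) auto
  moreover have "measure (joint d j) (concentrated d j \<epsilon>) = 1 - measure (joint d j) (bad d)" for d
  proof -
    interpret prob_space "joint d j" using prob_space_joint[OF j] .
    have "concentrated d j \<epsilon> = space (joint d j) - bad d"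
      unfolding concentrated_def bad_def test_dev_def train_dev_def ..
    then show ?thesis
      unfolding bad_def using finite_train_idx finite_mates sets_test sets_train
      by (simp add: prob_compl sets.finite_UN)
  qed
  ultimately show ?thesis
    by (auto intro: tendsto_eq_intros)
qed

lemma prob_tendsto_1_if_concentrated:
  assumes j: "j < J" and "0 < \<epsilon>"
    and pred: "\<And>d. Measurable.pred (joint d j) (Q d)"
    and holds: "\<And>d \<omega>. 0 < d \<Longrightarrow> \<omega> \<in> concentrated d j \<epsilon> \<Longrightarrow> Q d \<omega>"
  shows "(\<lambda>d. measure (joint d j) {\<omega> \<in> space (joint d j). Q d \<omega>}) \<longlonglongrightarrow> 1"
proof (rule tendsto_sandwich[OF _ _ prob_concentrated_tendsto_1[OF j \<open>0 < \<epsilon>\<close>] tendsto_const])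
  show "\<forall>\<^sub>F d in sequentially. measure (joint d j) (concentrated d j \<epsilon>)
      \<le> measure (joint d j) {\<omega> \<in> space (joint d j). Q d \<omega>}"
    using eventually_gt_at_top[of 0]
  proof eventually_elim
    case (elim d)
    interpret prob_space "joint d j" using prob_space_joint[OF j] .
    show ?case
      using pred holds[OF elim] unfolding pred_def
      by (intro finite_measure_mono) (auto simp: concentrated_def)
  qed
  show "\<forall>\<^sub>F d in sequentially. measure (joint d j) {\<omega> \<in> space (joint d j). Q d \<omega>} \<le> 1"
    using prob_space_joint[OF j] by (simp add: prob_space.prob_le_1)
qed

lemma concentrated_test:
  assumes "\<omega> \<in> concentrated d j \<epsilon>" "p \<in> train_idx J n"
  shows "\<bar>sq_dist d (snd \<omega>) (fst \<omega> p) / real d - lim_sq_dist j (fst p)\<bar> \<le> \<epsilon>"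
proof -
  have "\<omega> \<in> space (joint d j)" "\<omega> \<notin> deviation d j \<epsilon> (lim_sq_dist j (fst p)) snd (\<lambda>\<omega>. fst \<omega> p)"
    using assms unfolding concentrated_def by auto
  then show ?thesis
    unfolding deviation_def by simp
qed

lemma concentrated_train:
  assumes "\<omega> \<in> concentrated d j \<epsilon>" "c < J" "s < n c" "t < n c" "s \<noteq> t"
  shows "\<bar>sq_dist d (fst \<omega> (c, s)) (fst \<omega> (c, t)) / real d - lim_sq_dist c c\<bar> \<le> \<epsilon>"
proof -
  have "(c, s) \<in> train_idx J n" "(c, t) \<in> mates (c, s)"
    using assms(2-5) by (simp_all add: mates_def train_idx_iff)
  then have "\<omega> \<in> space (joint d j)"
    "\<omega> \<notin> deviation d j \<epsilon> (lim_sq_dist c c) (\<lambda>\<omega>. fst \<omega> (c, s)) (\<lambda>\<omega>. fst \<omega> (c, t))"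
    using assms(1) unfolding concentrated_def by fastforce+
  then show ?thesis
    unfolding deviation_def by simp
qed

lemma nearer_on_concentrated:
  assumes \<omega>: "\<omega> \<in> concentrated d j \<epsilon>" and "0 < d"
    and p: "p \<in> train_idx J n" and q: "q \<in> train_idx J n"
    and gap: "lim_sq_dist j (fst p) + 2 * \<epsilon> < lim_sq_dist j (fst q)"
  shows "eucl_dist d (snd \<omega>) (fst \<omega> p) < eucl_dist d (snd \<omega>) (fst \<omega> q)"
proof -
  have "sq_dist d (snd \<omega>) (fst \<omega> p) \<le> real d * (lim_sq_dist j (fst p) + \<epsilon>)"
    using mult_bounds_of_deviation(2)[OF _ concentrated_test[OF \<omega> p]] \<open>0 < d\<close> by simp
  also have "\<dots> < real d * (lim_sq_dist j (fst q) - \<epsilon>)"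
    using gap \<open>0 < d\<close> by (intro mult_strict_left_mono) auto
  also have "\<dots> \<le> sq_dist d (snd \<omega>) (fst \<omega> q)"
    using mult_bounds_of_deviation(1)[OF _ concentrated_test[OF \<omega> q]] \<open>0 < d\<close> by simp
  finally show ?thesis
    unfolding eucl_dist_eq_sqrt_sq_dist by (rule real_sqrt_less_mono)
qed

lemma gen_assigns_on_concentrated:
  fixes \<delta> :: "(nat \<Rightarrow> real) \<Rightarrow> (nat \<Rightarrow> real) \<Rightarrow> real" and g :: "real \<Rightarrow> real" and s \<eta> :: real
  assumes j: "j < J" and \<omega>: "\<omega> \<in> concentrated d j \<epsilon>" and "0 < s"
    and scaled: "\<And>u v \<mu>. 0 \<le> \<mu> \<Longrightarrow> \<bar>sq_dist d u v / real d - \<mu>\<bar> \<le> \<epsilon>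
                   \<Longrightarrow> s * (g \<mu> - \<eta>) \<le> \<delta> u v \<and> \<delta> u v \<le> s * (g \<mu> + \<eta>)"
    and gap: "\<And>c. c < J \<Longrightarrow> c \<noteq> j
                \<Longrightarrow> g (lim_sq_dist j j) / 2 + g (lim_sq_dist c c) / 2 + 3 * \<eta> < g (lim_sq_dist j c)"
  shows "gen_assigns \<delta> J n (fst \<omega>) (snd \<omega>) j"
proof -
  have test: "\<bar>sq_dist d (snd \<omega>) (fst \<omega> (c, i)) / real d - lim_sq_dist j c\<bar> \<le> \<epsilon>"
    if "c < J" "i < n c" for c i
    using concentrated_test[OF \<omega>, of "(c, i)"] that by (simp add: train_idx_iff)
  show ?thesis
proof (rule gen_assigns_if_separated[OF j n2, where hi = "s * (g (lim_sq_dist j j) + \<eta>)"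
      and lo = "\<lambda>c. s * (g (lim_sq_dist j c) - \<eta>)"
      and w_lo = "\<lambda>c. s * (g (lim_sq_dist c c) - \<eta>)" and w_hi = "\<lambda>c. s * (g (lim_sq_dist c c) + \<eta>)"])
  show "\<delta> (snd \<omega>) (fst \<omega> (j, i)) \<le> s * (g (lim_sq_dist j j) + \<eta>)" if "i < n j" for i
    using scaled[OF lim_sq_dist_nonneg[OF j j] test[OF j that]] by simp
  show "s * (g (lim_sq_dist j c) - \<eta>) \<le> \<delta> (snd \<omega>) (fst \<omega> (c, i))" if "c < J" "c \<noteq> j" "i < n c" for c i
    using scaled[OF lim_sq_dist_nonneg[OF j that(1)] test[OF that(1,3)]] by simp
  show "s * (g (lim_sq_dist c c) - \<eta>) \<le> \<delta> (fst \<omega> (c, a)) (fst \<omega> (c, b))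
      \<and> \<delta> (fst \<omega> (c, a)) (fst \<omega> (c, b)) \<le> s * (g (lim_sq_dist c c) + \<eta>)"
    if "c < J" "a < b" "b < n c" for c a b
    using scaled[OF lim_sq_dist_nonneg[OF that(1) that(1)] concentrated_train[OF \<omega> that(1) _ that(3)]] that
    by simp
  show "s * (g (lim_sq_dist j j) + \<eta>) - s * (g (lim_sq_dist j j) - \<eta>) / 2
      < s * (g (lim_sq_dist j c) - \<eta>) - s * (g (lim_sq_dist c c) + \<eta>) / 2"
    if "c < J" "c \<noteq> j" for c
  proof -
    have "s * (g (lim_sq_dist j j) / 2 + g (lim_sq_dist c c) / 2 + 3 * \<eta>) < s * g (lim_sq_dist j c)"
      using gap[OF that] \<open>0 < s\<close> by (rule mult_strict_left_mono)
    then show ?thesis by (simp add: field_simps)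
  qed
qed
qed

lemma measurable_test_eucl_dist:
  "j < J \<Longrightarrow> p \<in> train_idx J n \<Longrightarrow> (\<lambda>\<omega>. eucl_dist d (snd \<omega>) (fst \<omega> p)) \<in> borel_measurable (joint d j)"
  unfolding eucl_dist_eq_sqrt_sq_dist using measurable_test_sq_dist by simp

lemma pred_knn_assigns:
  "j < J \<Longrightarrow> Measurable.pred (joint d j) (\<lambda>\<omega>. knn_assigns d J n k (fst \<omega>) (snd \<omega>) j)"
  unfolding knn_assigns_def using measurable_test_eucl_dist
  by (intro pred_intros_conj1' pred_all_knn_sets)

lemma pred_not_knn_may_assign:
  "j < J \<Longrightarrow> Measurable.pred (joint d j) (\<lambda>\<omega>. \<not> knn_may_assign d J n k (fst \<omega>) (snd \<omega>) j)"
proof -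
  have "\<not> knn_may_assign d J n k x z j \<longleftrightarrow>
      (j < J \<longrightarrow> (\<forall>S. knn_set d J n k x z S \<longrightarrow> \<not> (\<forall>c<J. votes S c \<le> votes S j)))" for x z
    unfolding knn_may_assign_def by auto
  then show "j < J \<Longrightarrow> ?thesis"
    using measurable_test_eucl_dist by (simp only:) (intro pred_intros_imp' pred_all_knn_sets)
qed

lemma pred_ch_assigns: "j < J \<Longrightarrow> Measurable.pred (joint d j) (\<lambda>\<omega>. ch_assigns d J n (fst \<omega>) (snd \<omega>) j)"
  unfolding ch_assigns_def eucl_dist_power2
  by (intro pred_gen_assigns measurable_test_sq_dist measurable_train_sq_dist)

lemma pred_mch_assigns: "j < J \<Longrightarrow> Measurable.pred (joint d j) (\<lambda>\<omega>. mch_assigns d J n (fst \<omega>) (snd \<omega>) j)"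
  unfolding mch_assigns_def eucl_dist_eq_sqrt_sq_dist[abs_def]
  by (intro pred_gen_assigns measurable_compose[OF _ borel_measurable_sqrt]
      measurable_test_sq_dist measurable_train_sq_dist)

lemma knn_assigns_tendsto_1:
  assumes j: "j < J" and k: "1 \<le> k" "k \<le> n j"
    and separated: "\<And>c. c < J \<Longrightarrow> c \<noteq> j \<Longrightarrow> \<bar>sigma2 j - sigma2 c\<bar> < nu2 j c"
  shows "(\<lambda>d. measure (joint d j) {\<omega> \<in> space (joint d j). knn_assigns d J n k (fst \<omega>) (snd \<omega>) j}) \<longlonglongrightarrow> 1"
proof -
  have "0 < (lim_sq_dist j c - lim_sq_dist j j) / 3" if "c \<in> {..<J} - {j}" for c
    using separated[of c] that by (auto simp: lim_sq_dist_def abs_less_iff)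
  then obtain \<epsilon> where "0 < \<epsilon>" and \<epsilon>: "\<And>c. c \<in> {..<J} - {j} \<Longrightarrow> \<epsilon> \<le> (lim_sq_dist j c - lim_sq_dist j j) / 3"
    by (rule finite_positive_lower_bound[of "{..<J} - {j}", rotated]) auto
  show ?thesis
  proof (rule prob_tendsto_1_if_concentrated[OF j \<open>0 < \<epsilon>\<close> pred_knn_assigns[OF j]])
    fix d :: nat and \<omega> assume "0 < d" "\<omega> \<in> concentrated d j \<epsilon>"
    show "knn_assigns d J n k (fst \<omega>) (snd \<omega>) j"
    proof (rule knn_assigns_if_own_class_nearer[where J = J and n = n, OF j k])
      fix p q assume p: "p \<in> train_idx J n" "fst p = j" and q: "q \<in> train_idx J n" "fst q \<noteq> j"
      then have "lim_sq_dist j (fst p) + 2 * \<epsilon> < lim_sq_dist j (fst q)"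
        using \<epsilon>[of "fst q"] \<open>0 < \<epsilon>\<close> by (auto simp: train_idx_def)
      then show "eucl_dist d (snd \<omega>) (fst \<omega> p) < eucl_dist d (snd \<omega>) (fst \<omega> q)"
        using nearer_on_concentrated \<open>0 < d\<close> \<open>\<omega> \<in> concentrated d j \<epsilon>\<close> p q by blast
    qed
  qed
qed

lemma not_knn_may_assign_tendsto_1:
  assumes j: "j < J" and i: "i < J" "i \<noteq> j" and k: "1 \<le> k" "k \<le> n i"
    and nearer: "lim_sq_dist j i < lim_sq_dist j j"
  shows "(\<lambda>d. measure (joint d j) {\<omega> \<in> space (joint d j). \<not> knn_may_assign d J n k (fst \<omega>) (snd \<omega>) j})
    \<longlonglongrightarrow> 1"
proof -
  define \<epsilon> where "\<epsilon> = (lim_sq_dist j j - lim_sq_dist j i) / 3"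
  have "0 < \<epsilon>" using nearer unfolding \<epsilon>_def by simp
  show ?thesis
  proof (rule prob_tendsto_1_if_concentrated[OF j \<open>0 < \<epsilon>\<close> pred_not_knn_may_assign[OF j]])
    fix d :: nat and \<omega> assume "0 < d" "\<omega> \<in> concentrated d j \<epsilon>"
    show "\<not> knn_may_assign d J n k (fst \<omega>) (snd \<omega>) j"
    proof (rule not_knn_may_assign_if_other_class_nearer[where J = J and n = n, OF i k])
      fix p q assume p: "p \<in> train_idx J n" "fst p = i" and q: "q \<in> train_idx J n" "fst q = j"
      then have "lim_sq_dist j (fst p) + 2 * \<epsilon> < lim_sq_dist j (fst q)"
        unfolding \<epsilon>_def using nearer by (simp add: field_simps)
      then show "eucl_dist d (snd \<omega>) (fst \<omega> p) < eucl_dist d (snd \<omega>) (fst \<omega> q)"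
        using nearer_on_concentrated \<open>0 < d\<close> \<open>\<omega> \<in> concentrated d j \<epsilon>\<close> p q by blast
    qed
  qed
qed

lemma exists_class_not_knn_may_assign_tendsto_1:
  assumes k: "1 \<le> k" "\<forall>j<J. k < n j"
    and "\<exists>j<J. \<exists>i<J. j \<noteq> i \<and> nu2 j i < \<bar>sigma2 j - sigma2 i\<bar>"
  shows "\<exists>j<J. (\<lambda>d. measure (joint d j)
      {\<omega> \<in> space (joint d j). \<not> knn_may_assign d J n k (fst \<omega>) (snd \<omega>) j}) \<longlonglongrightarrow> 1"
proof -
  obtain a b where ab: "a < J" "b < J" "a \<noteq> b" and small: "nu2 a b < \<bar>sigma2 a - sigma2 b\<bar>"
    using assms(3) by blast
  show ?thesis
  proof (cases "sigma2 b \<le> sigma2 a")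
    case True
    then have "lim_sq_dist a b < lim_sq_dist a a"
      using small ab unfolding lim_sq_dist_def by auto
    moreover have "k \<le> n b" using k(2) ab by auto
    ultimately show ?thesis
      using not_knn_may_assign_tendsto_1[OF ab(1) ab(2) ab(3)[symmetric] k(1)] ab(1) by blast
  next
    case False
    then have "lim_sq_dist b a < lim_sq_dist b b"
      using small ab nu2_commute[OF ab] unfolding lim_sq_dist_def by auto
    moreover have "k \<le> n a" using k(2) ab by auto
    ultimately show ?thesis
      using not_knn_may_assign_tendsto_1[OF ab(2) ab(1) ab(3) k(1)] ab(2) by blast
  qed
qed

lemma ch_assigns_tendsto_1:
  assumes j: "j < J" and separated: "\<And>c. c < J \<Longrightarrow> c \<noteq> j \<Longrightarrow> 0 < nu2 j c"
  shows "(\<lambda>d. measure (joint d j) {\<omega> \<in> space (joint d j). ch_assigns d J n (fst \<omega>) (snd \<omega>) j}) \<longlonglongrightarrow> 1"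
proof -
  obtain \<epsilon> where "0 < \<epsilon>" and \<epsilon>: "\<And>c. c \<in> {..<J} - {j} \<Longrightarrow> \<epsilon> \<le> nu2 j c / 4"
    by (rule finite_positive_lower_bound[of "{..<J} - {j}" "\<lambda>c. nu2 j c / 4"]) (use separated in auto)
  show ?thesis
  proof (rule prob_tendsto_1_if_concentrated[OF j \<open>0 < \<epsilon>\<close> pred_ch_assigns[OF j]])
    fix d :: nat and \<omega> assume "0 < d" "\<omega> \<in> concentrated d j \<epsilon>"
    show "ch_assigns d J n (fst \<omega>) (snd \<omega>) j"
      unfolding ch_assigns_def eucl_dist_power2
    proof (rule gen_assigns_on_concentrated[OF j \<open>\<omega> \<in> concentrated d j \<epsilon>\<close>, where g = "\<lambda>\<mu>. \<mu>"])
      show "0 < real d" using \<open>0 < d\<close> by simp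
      show "real d * (\<mu> - \<epsilon>) \<le> sq_dist d u v \<and> sq_dist d u v \<le> real d * (\<mu> + \<epsilon>)"
        if "\<bar>sq_dist d u v / real d - \<mu>\<bar> \<le> \<epsilon>" for u v \<mu>
        using mult_bounds_of_deviation[OF _ that] \<open>0 < d\<close> by simp
      show "lim_sq_dist j j / 2 + lim_sq_dist c c / 2 + 3 * \<epsilon> < lim_sq_dist j c"
        if "c < J" "c \<noteq> j" for c
        using \<epsilon>[of c] separated[OF that] that unfolding lim_sq_dist_def by auto
    qed
  qed
qed

lemma mch_assigns_tendsto_1:
  assumes j: "j < J"
    and separated: "\<And>c. c < J \<Longrightarrow> c \<noteq> j \<Longrightarrow> 0 < nu2 j c \<or> sigma2 j \<noteq> sigma2 c"
  shows "(\<lambda>d. measure (joint d j) {\<omega> \<in> space (joint d j). mch_assigns d J n (fst \<omega>) (snd \<omega>) j}) \<longlonglongrightarrow> 1"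
proof -
  define gap where "gap c = sqrt (lim_sq_dist j c) - sqrt (lim_sq_dist j j) / 2 - sqrt (lim_sq_dist c c) / 2" for c
  have "0 < gap c / 4" if "c \<in> {..<J} - {j}" for c
  proof -
    have c: "c < J" "j \<noteq> c" using that by auto
    have lim: "lim_sq_dist j j = sigma2 j + sigma2 j" "lim_sq_dist c c = sigma2 c + sigma2 c"
      "lim_sq_dist j c = sigma2 j + sigma2 c + nu2 j c"
      using c by (simp_all add: lim_sq_dist_def)
    have "sqrt (lim_sq_dist j j) / 2 + sqrt (lim_sq_dist c c) / 2 < sqrt (lim_sq_dist j c)"
      unfolding lim
      by (rule sqrt_midpoint_less[OF sigma2_nonneg[OF j] sigma2_nonneg[OF c(1)] nu2_nonneg[OF j c]])
        (use separated[OF c(1)] c in auto)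
    then show ?thesis unfolding gap_def by simp
  qed
  then obtain \<eta> where "0 < \<eta>" and \<eta>: "\<And>c. c \<in> {..<J} - {j} \<Longrightarrow> \<eta> \<le> gap c / 4"
    by (rule finite_positive_lower_bound[of "{..<J} - {j}", rotated]) auto
  have "0 < \<eta>^2" using \<open>0 < \<eta>\<close> by simp
  show ?thesis
  proof (rule prob_tendsto_1_if_concentrated[OF j \<open>0 < \<eta>^2\<close> pred_mch_assigns[OF j]])
    fix d :: nat and \<omega> assume "0 < d" "\<omega> \<in> concentrated d j (\<eta>^2)"
    show "mch_assigns d J n (fst \<omega>) (snd \<omega>) j"
      unfolding mch_assigns_def
    proof (rule gen_assigns_on_concentrated[OF j \<open>\<omega> \<in> concentrated d j (\<eta>^2)\<close>, where g = sqrt])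
      show "0 < sqrt (real d)" using \<open>0 < d\<close> by simp
      show "sqrt d * (sqrt \<mu> - \<eta>) \<le> eucl_dist d u v \<and> eucl_dist d u v \<le> sqrt d * (sqrt \<mu> + \<eta>)"
        if "0 \<le> \<mu>" "\<bar>sq_dist d u v / real d - \<mu>\<bar> \<le> \<eta>^2" for u v \<mu>
        using sqrt_bounds_of_deviation[OF sq_dist_nonneg _ that(1) _ that(2)] \<open>0 < d\<close> \<open>0 < \<eta>\<close>
        by (simp add: eucl_dist_eq_sqrt_sq_dist)
      show "sqrt (lim_sq_dist j j) / 2 + sqrt (lim_sq_dist c c) / 2 + 3 * \<eta> < sqrt (lim_sq_dist j c)"
        if "c < J" "c \<noteq> j" for c
        using \<eta>[of c] \<open>0 < \<eta>\<close> that unfolding gap_def by auto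
    qed
  qed
qed

end

theorem theorem1:
  fixes J :: nat and n :: "nat \<Rightarrow> nat" and k :: nat
    and F :: "nat \<Rightarrow> nat \<Rightarrow> (nat \<Rightarrow> real) measure"
    and sigma2 :: "nat \<Rightarrow> real" and nu2 :: "nat \<Rightarrow> nat \<Rightarrow> real"
  assumes J2: "J \<ge> 2"
    and n2: "\<And>j. j < J \<Longrightarrow> n j \<ge> 2"
    and prob: "\<And>d j. j < J \<Longrightarrow> prob_space (F d j)"
    and sets_F: "\<And>d j. j < J \<Longrightarrow> sets (F d j) = sets (vec_space d)"
    and A1: "\<exists>C. \<forall>d j r. j < J \<longrightarrow> r < d \<longrightarrow>
               integrable (F d j) (\<lambda>x. (x r)^4) \<and> (\<integral>x. (x r)^4 \<partial>(F d j)) \<le> C"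
    and A2: "\<And>j i. j < J \<Longrightarrow> i < J \<Longrightarrow>
               (\<lambda>d. (\<Sum>r<d. \<Sum>s\<in>{..<d} - {r}.
                    \<bar>corr_of (F d j \<Otimes>\<^sub>M F d i) (\<lambda>(x, y). (x r - y r)^2) (\<lambda>(x, y). (x s - y s)^2)\<bar>)
                  / (real d)^2) \<longlonglongrightarrow> 0"
    and A3_sigma: "\<And>j. j < J \<Longrightarrow> (\<lambda>d. trace_disp d (F d j) / real d) \<longlonglongrightarrow> sigma2 j"
    and A3_nu: "\<And>j i. j < J \<Longrightarrow> i < J \<Longrightarrow> j \<noteq> i \<Longrightarrow>
               (\<lambda>d. (\<Sum>r<d. (mean_vec (F d j) r - mean_vec (F d i) r)^2) / real d) \<longlonglongrightarrow> nu2 j i"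
  shows
    \<comment> \<open>(a), first part\<close>
    "(1 \<le> k \<and> (\<forall>j<J. k < n j) \<and>
       (\<forall>j<J. \<forall>i<J. j \<noteq> i \<longrightarrow> nu2 j i > \<bar>sigma2 j - sigma2 i\<bar>) \<longrightarrow>
       (\<forall>j<J. (\<lambda>d. measure (train_test J n (F d) j)
                {xz \<in> space (train_test J n (F d) j). knn_assigns d J n k (fst xz) (snd xz) j})
              \<longlonglongrightarrow> 1))
   \<and> \<comment> \<open>(a), second part\<close>
    (1 \<le> k \<and> (\<forall>j<J. k < n j) \<and>
       (\<exists>j<J. \<exists>i<J. j \<noteq> i \<and> nu2 j i < \<bar>sigma2 j - sigma2 i\<bar>) \<longrightarrow>
       (\<exists>j<J. (\<lambda>d. measure (train_test J n (F d) j)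
                {xz \<in> space (train_test J n (F d) j). \<not> knn_may_assign d J n k (fst xz) (snd xz) j})
              \<longlonglongrightarrow> 1))
   \<and> \<comment> \<open>(b)\<close>
    ((\<forall>j<J. \<forall>i<J. j \<noteq> i \<longrightarrow> nu2 j i > 0) \<longrightarrow>
       (\<forall>j<J. (\<lambda>d. measure (train_test J n (F d) j)
                {xz \<in> space (train_test J n (F d) j). ch_assigns d J n (fst xz) (snd xz) j})
              \<longlonglongrightarrow> 1))
   \<and> \<comment> \<open>(c)\<close>
    ((\<forall>j<J. \<forall>i<J. j \<noteq> i \<longrightarrow> nu2 j i > 0 \<or> sigma2 j \<noteq> sigma2 i) \<longrightarrow>
       (\<forall>j<J. (\<lambda>d. measure (train_test J n (F d) j)
                {xz \<in> space (train_test J n (F d) j). mch_assigns d J n (fst xz) (snd xz) j})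
              \<longlonglongrightarrow> 1))"
proof -
  interpret hdlss_classes J n F sigma2 nu2
  proof (rule hdlss_classes.intro)
    show "(\<lambda>d. sq_corr_sum d (F d j \<Otimes>\<^sub>M F d i) / (real d)^2) \<longlonglongrightarrow> 0" if "j < J" "i < J" for j i
      using A2[OF that] unfolding sq_corr_sum_def coord_sq_diff_def .
  qed (fact n2 prob sets_F A1 A3_sigma A3_nu)+
  show ?thesis
    by (intro conjI impI allI; (elim conjE)?)
      (auto intro!: knn_assigns_tendsto_1 exists_class_not_knn_may_assign_tendsto_1
        ch_assigns_tendsto_1 mch_assigns_tendsto_1 simp: less_imp_le)
qed

end
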